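(* Let $M,n\ge 1$ and let $f^i_m:\mathbb{R}^d\to\mathbb{R}$ ($m\in[M]$, $i\in[n]$) be differentiable, convex and $L$-smooth, with $f_m=\frac1n\sum_{i=1}^n f^i_m$ and $f=\frac1M\sum_{m=1}^M f_m$. Assume $f$ is $L$-smooth and $\mu$-strongly convex with $\mu>0$, and let $x_*$ be its minimizer. Run Nastya (Random-Reshuffling option) with client stepsize $\gamma>0$, server stepsize $\eta$ and cohort size $C\in\{1,\dots,M\}$, where $\gamma n\le \eta\le \frac{1}{16L}$. Then for every $T\ge 1$, $$\mathbb{E}\big[\|x_T-x_*\|^2\big]\le \Big(1-\frac{\eta\mu}{2}\Big)^T\|x_0-x_*\|^2+\frac{5\gamma^2 nL}{\mu}\Big(\frac1M\sum_{m=1}^M\sigma_{*,m}^2+n\sigma_*^2\Big)+\frac{8\eta}{\mu}\cdot\frac{M-C}{C\max\{M-1,1\}}\,\sigma_*^2 .$$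
   Context: Here $[k]=\{1,\dots,k\}$. A function $h$ is $L$-smooth if $\|\nabla h(x)-\nabla h(y)\|\le L\|x-y\|$ for all $x,y$. Algorithm Nastya (Random-Reshuffling option), with inputs $\gamma>0$, $\eta\ge0$, $C\in\{1,\dots,M\}$, $x_0\in\mathbb{R}^d$. For each round $t=0,1,\dots,T-1$: (i) sample a cohort $S_t\subseteq[M]$ uniformly at random among all subsets of cardinality $C$; (ii) for each $m\in S_t$, sample a permutation $\pi_m=(\pi_m^0,\dots,\pi_m^{n-1})$ of $[n]$ uniformly at random, and set $x^0_{t,m}=x_t$ and $x^{i+1}_{t,m}=x^i_{t,m}-\gamma\nabla f_m^{\pi_m^i}(x^i_{t,m})$ for $i=0,\dots,n-1$; (iii) set $g_{t,m}=\frac{1}{\gamma n}(x_t-x^n_{t,m})$, $g_t=\frac1C\sum_{m\in S_t}g_{t,m}$ and $x_{t+1}=x_t-\eta g_t$. All samplings (cohorts and permutations, across clients and rounds) are mutually independent and independent of the past. Notation: $\sigma_*^2=\frac1M\sum_{m=1}^M\|\nabla f_m(x_* )\|^2$ and $\sigma_{*,m}^2=\frac1n\sum_{i=1}^n\|\nabla f^i_m(x_* )\|^2$. *)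

theory Defs
  imports "HOL-Analysis.Analysis" "HOL-Probability.Probability"
begin

text \<open>Indices are 0-based: clients m in {0..<M}, data points i in {0..<n}.
  f m i is the function f_m^(i+1); g m i is its gradient.\<close>

definition L_smooth_grad :: "('a::euclidean_space \<Rightarrow> 'a) \<Rightarrow> real \<Rightarrow> bool" where
  "L_smooth_grad h' L \<longleftrightarrow> (\<forall>x y. norm (h' x - h' y) \<le> L * norm (x - y))"

definition strongly_convex :: "('a::euclidean_space \<Rightarrow> real) \<Rightarrow> real \<Rightarrow> bool" where
  "strongly_convex h \<mu> \<longleftrightarrow> (\<forall>x y t. 0 \<le> t \<and> t \<le> 1 \<longrightarrow>
     h (t *\<^sub>R x + (1 - t) *\<^sub>R y) \<le> t * h x + (1 - t) * h y - \<mu> / 2 * t * (1 - t) * (norm (x - y))\<^sup>2)"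

definition client_fun :: "nat \<Rightarrow> (nat \<Rightarrow> nat \<Rightarrow> 'a \<Rightarrow> 'b::real_vector) \<Rightarrow> nat \<Rightarrow> 'a \<Rightarrow> 'b" where
  "client_fun n f m x = (1 / real n) *\<^sub>R (\<Sum>i<n. f m i x)"

definition global_fun :: "nat \<Rightarrow> nat \<Rightarrow> (nat \<Rightarrow> nat \<Rightarrow> 'a \<Rightarrow> 'b::real_vector) \<Rightarrow> 'a \<Rightarrow> 'b" where
  "global_fun M n f x = (1 / real M) *\<^sub>R (\<Sum>m<M. client_fun n f m x)"

fun local_iter :: "(nat \<Rightarrow> nat \<Rightarrow> 'a::real_vector \<Rightarrow> 'a) \<Rightarrow> real \<Rightarrow> nat \<Rightarrow> (nat \<Rightarrow> nat) \<Rightarrow> 'a \<Rightarrow> nat \<Rightarrow> 'a" where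
  "local_iter g \<gamma> m \<pi> x 0 = x"
| "local_iter g \<gamma> m \<pi> x (Suc i) =
     (let y = local_iter g \<gamma> m \<pi> x i in y - \<gamma> *\<^sub>R g m (\<pi> i) y)"

definition cohorts :: "nat \<Rightarrow> nat \<Rightarrow> nat set set" where
  "cohorts M C = {S. S \<subseteq> {..<M} \<and> card S = C}"

definition perms :: "nat \<Rightarrow> (nat \<Rightarrow> nat) set" where
  "perms n = {p. p permutes {..<n}}"

definition nastya_step ::
  "nat \<Rightarrow> nat \<Rightarrow> nat \<Rightarrow> (nat \<Rightarrow> nat \<Rightarrow> 'a::real_vector \<Rightarrow> 'a) \<Rightarrow> real \<Rightarrow> real \<Rightarrow> 'a \<Rightarrow> 'a pmf" where
  "nastya_step M n C g \<gamma> \<eta> x =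
     bind_pmf (pmf_of_set (cohorts M C)) (\<lambda>S.
     bind_pmf (Pi_pmf S id (\<lambda>_. pmf_of_set (perms n))) (\<lambda>\<pi>.
       (let gm = (\<lambda>m. (1 / (\<gamma> * real n)) *\<^sub>R (x - local_iter g \<gamma> m (\<pi> m) x n));
            gt = (1 / real C) *\<^sub>R (\<Sum>m\<in>S. gm m)
        in return_pmf (x - \<eta> *\<^sub>R gt))))"

fun nastya ::
  "nat \<Rightarrow> nat \<Rightarrow> nat \<Rightarrow> (nat \<Rightarrow> nat \<Rightarrow> 'a::real_vector \<Rightarrow> 'a) \<Rightarrow> real \<Rightarrow> real \<Rightarrow> 'a \<Rightarrow> nat \<Rightarrow> 'a pmf" where
  "nastya M n C g \<gamma> \<eta> x0 0 = return_pmf x0"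
| "nastya M n C g \<gamma> \<eta> x0 (Suc t) = bind_pmf (nastya M n C g \<gamma> \<eta> x0 t) (nastya_step M n C g \<gamma> \<eta>)"

end

theory Submission
  imports Defs
begin

text \<open>
  A round moves \<open>x_t\<close> by \<open>-\<eta>\<close> times the cohort average of the pseudo-gradients \<open>g_(t,m)\<close>,
  each the average of the data gradients along a shuffled local epoch.  Splitting
  \<open>\<parallel>x_(t+1) - x_*\<parallel>\<^sup>2\<close> into conditional mean and variance, three effects appear.  By the
  three-point inequality the mean pseudo-gradient has inner product at least \<open>f(x_t) - f(x_*)\<close>
  with \<open>x_t - x_*\<close>, up to the local drift \<open>V_t = 1/n \<Sum>_i \<parallel>x^i_(t,m) - x_t\<parallel>\<^sup>2\<close>; sampling the
  cohort without replacement costs \<open>(M - C)/(C (M - 1))\<close> times the heterogeneity \<open>\<sigma>_*\<^sup>2\<close>; and,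
  since the data are also sampled without replacement, the drift is of order
  \<open>\<gamma>\<^sup>2 n (\<sigma>_(*,m)\<^sup>2 + n \<sigma>_*\<^sup>2)\<close> plus a small multiple of the Bregman gap.  With \<open>\<eta> L \<le> 1/16\<close>
  the gap terms are absorbed, and strong convexity turns the rest into
  \<open>E \<parallel>x_(t+1) - x_*\<parallel>\<^sup>2 \<le> (1 - \<eta>\<mu>/2) \<parallel>x_t - x_*\<parallel>\<^sup>2 + A\<close>, which unrolls to the claim.
\<close>

section \<open>Smooth convex functions\<close>

definition bregman_div :: "('a::real_inner \<Rightarrow> real) \<Rightarrow> ('a \<Rightarrow> 'a) \<Rightarrow> 'a \<Rightarrow> 'a \<Rightarrow> real" where
  "bregman_div \<phi> G x z = \<phi> x - \<phi> z - G z \<bullet> (x - z)"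

lemma L_smooth_grad_descent:
  fixes \<phi> :: "'a::euclidean_space \<Rightarrow> real" and G :: "'a \<Rightarrow> 'a"
  assumes der: "\<And>x. (\<phi> has_derivative (\<lambda>h. G x \<bullet> h)) (at x)"
    and sm: "L_smooth_grad G L"
  shows "\<phi> y \<le> \<phi> x + G x \<bullet> (y - x) + L / 2 * (norm (y - x))\<^sup>2"
proof -
  define d where "d = y - x"
  define p where "p t = \<phi> (x + t *\<^sub>R d) - t * (G x \<bullet> d) - L / 2 * t\<^sup>2 * (norm d)\<^sup>2" for t :: real
  have dp: "DERIV p t :> (G (x + t *\<^sub>R d) \<bullet> d - G x \<bullet> d - L * t * (norm d)\<^sup>2)" for t
  proof -
    have "((\<lambda>t. x + t *\<^sub>R d) has_derivative (\<lambda>s. s *\<^sub>R d)) (at t)"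
      by (auto intro!: derivative_eq_intros)
    from has_derivative_compose[OF this der]
    have \<phi>': "((\<lambda>t. \<phi> (x + t *\<^sub>R d)) has_real_derivative (G (x + t *\<^sub>R d) \<bullet> d)) (at t)"
      by (simp add: has_field_derivative_def mult.commute[of _ "G (x + t *\<^sub>R d) \<bullet> d"])
    show ?thesis unfolding p_def
      by (rule \<phi>' derivative_eq_intros refl | simp add: power2_eq_square)+
  qed
  have nonpos: "G (x + t *\<^sub>R d) \<bullet> d - G x \<bullet> d - L * t * (norm d)\<^sup>2 \<le> 0" if "0 \<le> t" for t
  proof -
    have "G (x + t *\<^sub>R d) \<bullet> d - G x \<bullet> d = (G (x + t *\<^sub>R d) - G x) \<bullet> d"
      by (simp add: inner_diff_left)
    also have "\<dots> \<le> norm (G (x + t *\<^sub>R d) - G x) * norm d" by (rule norm_cauchy_schwarz)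
    also have "\<dots> \<le> L * norm (t *\<^sub>R d) * norm d"
      using sm unfolding L_smooth_grad_def by (metis add_diff_cancel_left' mult_right_mono norm_ge_zero)
    also have "\<dots> = L * t * (norm d)\<^sup>2" using that by (simp add: power2_eq_square)
    finally show ?thesis by simp
  qed
  have "p 1 \<le> p 0"
    by (rule DERIV_nonpos_imp_nonincreasing[of 0 1 p]) (use dp nonpos in force)+
  then show ?thesis unfolding p_def d_def by (simp add: algebra_simps)
qed

lemma convex_on_gradient_ineq:
  fixes \<phi> :: "'a::euclidean_space \<Rightarrow> real" and G :: "'a \<Rightarrow> 'a"
  assumes der: "\<And>x. (\<phi> has_derivative (\<lambda>h. G x \<bullet> h)) (at x)"
    and cv: "convex_on UNIV \<phi>"
  shows "\<phi> x + G x \<bullet> (y - x) \<le> \<phi> y"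
proof -
  define d where "d = y - x"
  define p where "p t = \<phi> (x + t *\<^sub>R d)" for t :: real
  have "((\<lambda>t. x + t *\<^sub>R d) has_derivative (\<lambda>s. s *\<^sub>R d)) (at 0)"
    by (auto intro!: derivative_eq_intros)
  from has_derivative_compose[OF this der]
  have dp: "(p has_real_derivative (G x \<bullet> d)) (at 0 within UNIV)"
    unfolding p_def by (simp add: has_field_derivative_def mult.commute[of _ "G x \<bullet> d"])
  have cvp: "convex_on UNIV p"
  proof (rule convex_onI)
    fix t a b :: real assume "0 < t" "t < 1"
    have "x + ((1 - t) *\<^sub>R a + t *\<^sub>R b) *\<^sub>R d = (1 - t) *\<^sub>R (x + a *\<^sub>R d) + t *\<^sub>R (x + b *\<^sub>R d)"
      by (simp add: algebra_simps)
    then show "p ((1 - t) *\<^sub>R a + t *\<^sub>R b) \<le> (1 - t) * p a + t * p b"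
      unfolding p_def using convex_onD[OF cv, of t "x + a *\<^sub>R d" "x + b *\<^sub>R d"] \<open>0 < t\<close> \<open>t < 1\<close>
      by simp
  qed simp
  have "p 1 - p 0 \<ge> (G x \<bullet> d) * (1 - 0)"
    by (rule convex_on_imp_above_tangent[OF cvp]) (use dp in auto)
  then show ?thesis unfolding p_def d_def by simp
qed

text \<open>Evaluate the convexity inequality at the point reached by a gradient step of length
  \<open>1/L\<close> from \<open>x\<close>, and the descent lemma between \<open>x\<close> and that point.\<close>
lemma L_smooth_convex_cocoercive:
  fixes \<phi> :: "'a::euclidean_space \<Rightarrow> real" and G :: "'a \<Rightarrow> 'a"
  assumes der: "\<And>x. (\<phi> has_derivative (\<lambda>h. G x \<bullet> h)) (at x)"
    and cv: "convex_on UNIV \<phi>" and sm: "L_smooth_grad G L" and L: "L > 0"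
  shows "(norm (G x - G y))\<^sup>2 \<le> 2 * L * bregman_div \<phi> G x y"
proof -
  define u where "u = G x - G y"
  define z where "z = x - (1 / L) *\<^sub>R u"
  have a: "\<phi> y + G y \<bullet> (z - y) \<le> \<phi> z" by (rule convex_on_gradient_ineq[OF der cv])
  have b: "\<phi> z \<le> \<phi> x + G x \<bullet> (z - x) + L / 2 * (norm (z - x))\<^sup>2"
    by (rule L_smooth_grad_descent[OF der sm])
  have "G y \<bullet> (z - y) = G y \<bullet> (x - y) - (1/L) * (G y \<bullet> u)"
    unfolding z_def by (simp add: inner_diff_right algebra_simps)
  moreover have "G x \<bullet> (z - x) = - (1/L) * (G x \<bullet> u)" unfolding z_def by simp
  moreover have "L / 2 * (norm (z - x))\<^sup>2 = (1 / (2 * L)) * (norm u)\<^sup>2"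
    unfolding z_def using L by (simp add: power2_eq_square field_simps)
  moreover have "(1/L) * (G x \<bullet> u) - (1/L) * (G y \<bullet> u) = (1/L) * (norm u)\<^sup>2"
    unfolding u_def power2_norm_eq_inner inner_diff_left by (simp add: diff_divide_distrib)
  ultimately have "(1/L) * (norm u)\<^sup>2 - (1 / (2 * L)) * (norm u)\<^sup>2 \<le> \<phi> x - \<phi> y - G y \<bullet> (x - y)"
    using a b by linarith
  moreover have "(1/L) * (norm u)\<^sup>2 - (1 / (2 * L)) * (norm u)\<^sup>2 = (norm u)\<^sup>2 / (2 * L)"
    using L by (simp add: field_simps)
  ultimately show ?thesis
    unfolding u_def bregman_div_def using L by (simp add: pos_divide_le_eq mult.commute)
qed

lemma L_smooth_convex_three_point:
  fixes \<phi> :: "'a::euclidean_space \<Rightarrow> real" and G :: "'a \<Rightarrow> 'a"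
  assumes der: "\<And>x. (\<phi> has_derivative (\<lambda>h. G x \<bullet> h)) (at x)"
    and cv: "convex_on UNIV \<phi>" and sm: "L_smooth_grad G L"
  shows "\<phi> x - \<phi> z - L / 2 * (norm (x - y))\<^sup>2 \<le> G y \<bullet> (x - z)"
proof -
  have "\<phi> y + G y \<bullet> (z - y) \<le> \<phi> z" by (rule convex_on_gradient_ineq[OF der cv])
  moreover have "\<phi> x \<le> \<phi> y + G y \<bullet> (x - y) + L / 2 * (norm (x - y))\<^sup>2"
    by (rule L_smooth_grad_descent[OF der sm])
  moreover have "G y \<bullet> (x - y) - G y \<bullet> (z - y) = G y \<bullet> (x - z)" by (simp add: inner_diff_right)
  ultimately show ?thesis by linarith
qed

lemma has_derivative_min_imp_grad_zero:
  fixes h :: "'a::real_inner \<Rightarrow> real"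
  assumes "(h has_derivative (\<lambda>v. G \<bullet> v)) (at xs)" and "\<And>x. h xs \<le> h x"
  shows "G = 0"
proof -
  have "(\<lambda>v. G \<bullet> v) = (\<lambda>v. 0)"
    by (rule has_derivative_local_min[OF assms(1)]) (simp add: assms(2))
  then have "G \<bullet> G = 0" by meson
  then show ?thesis by simp
qed

lemma strongly_convex_quadratic_growth:
  assumes sc: "strongly_convex h \<mu>" and min: "\<And>x. h xs \<le> h x"
  shows "\<mu> / 2 * (norm (x - xs))\<^sup>2 \<le> h x - h xs"
proof (rule field_le_mult_one_interval)
  fix t :: real assume t: "0 < t" "t < 1"
  have "h (t *\<^sub>R xs + (1 - t) *\<^sub>R x) \<le> t * h xs + (1 - t) * h x - \<mu> / 2 * t * (1 - t) * (norm (xs - x))\<^sup>2"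
    using sc t unfolding strongly_convex_def by auto
  moreover have "h xs \<le> h (t *\<^sub>R xs + (1 - t) *\<^sub>R x)" by (rule min)
  ultimately have "(1 - t) * (\<mu> / 2 * t * (norm (x - xs))\<^sup>2) \<le> (1 - t) * (h x - h xs)"
    by (simp add: norm_minus_commute algebra_simps)
  then have "\<mu> / 2 * t * (norm (x - xs))\<^sup>2 \<le> h x - h xs" using t by simp
  then show "t * (\<mu> / 2 * (norm (x - xs))\<^sup>2) \<le> h x - h xs" by (simp add: algebra_simps)
qed

lemma strongly_convex_le_L_smooth:
  fixes h :: "'a::euclidean_space \<Rightarrow> real"
  assumes der: "\<And>x. (h has_derivative (\<lambda>v. G x \<bullet> v)) (at x)" and sm: "L_smooth_grad G L"
    and sc: "strongly_convex h \<mu>" and min: "\<And>x. h xs \<le> h x"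
  shows "\<mu> \<le> L"
proof -
  obtain b :: 'a where b: "b \<in> Basis" using nonempty_Basis by blast
  have "G xs = 0" by (rule has_derivative_min_imp_grad_zero[OF der min])
  moreover have "h (xs + b) \<le> h xs + G xs \<bullet> (xs + b - xs) + L / 2 * (norm (xs + b - xs))\<^sup>2"
    by (rule L_smooth_grad_descent[OF der sm])
  ultimately have "h (xs + b) - h xs \<le> L / 2" using b by simp
  moreover have "\<mu> / 2 \<le> h (xs + b) - h xs"
    using strongly_convex_quadratic_growth[OF sc min, of "xs + b"] b by simp
  ultimately show ?thesis by simp
qed

lemma power2_norm_add:
  fixes a b :: "'a::real_inner"
  shows "(norm (a + b))\<^sup>2 = (norm a)\<^sup>2 + 2 * (a \<bullet> b) + (norm b)\<^sup>2"
  by (simp add: power2_norm_eq_inner inner_add_left inner_add_right inner_commute)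

lemma power2_norm_add_le_Young:
  fixes a b :: "'a::real_inner"
  assumes "\<epsilon> > 0"
  shows "(norm (a + b))\<^sup>2 \<le> (1 + \<epsilon>) * (norm a)\<^sup>2 + (1 + 1 / \<epsilon>) * (norm b)\<^sup>2"
proof -
  have "0 \<le> (norm (\<epsilon> *\<^sub>R a - b))\<^sup>2" by simp
  also have "\<dots> = \<epsilon> * (\<epsilon> * (norm a)\<^sup>2 + (1 / \<epsilon>) * (norm b)\<^sup>2 - 2 * (a \<bullet> b))"
    using assms unfolding power2_norm_eq_inner
    by (simp add: inner_diff_left inner_diff_right inner_commute algebra_simps)
  finally have "2 * (a \<bullet> b) \<le> \<epsilon> * (norm a)\<^sup>2 + (1 / \<epsilon>) * (norm b)\<^sup>2"
    using assms by (simp add: zero_le_mult_iff)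
  then show ?thesis unfolding power2_norm_add by (simp add: algebra_simps)
qed

lemma power2_norm_add_le:
  fixes a b :: "'a::real_inner"
  shows "(norm (a + b))\<^sup>2 \<le> 2 * (norm a)\<^sup>2 + 2 * (norm b)\<^sup>2"
  using power2_norm_add_le_Young[of 1 a b] by simp

lemma power2_norm_sum:
  fixes u :: "'i \<Rightarrow> 'a::real_inner"
  shows "(norm (\<Sum>j\<in>J. u j))\<^sup>2 = (\<Sum>j\<in>J. \<Sum>k\<in>J. u j \<bullet> u k)"
  unfolding power2_norm_eq_inner inner_sum_left inner_sum_right by (rule sum.swap)

lemma power2_norm_sum_le:
  fixes u :: "'i \<Rightarrow> 'a::real_normed_vector"
  shows "(norm (\<Sum>j\<in>J. u j))\<^sup>2 \<le> real (card J) * (\<Sum>j\<in>J. (norm (u j))\<^sup>2)"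
proof -
  have "(norm (\<Sum>j\<in>J. u j))\<^sup>2 \<le> (\<Sum>j\<in>J. norm (u j))\<^sup>2"
    by (intro power_mono norm_sum) auto
  also have "\<dots> \<le> (\<Sum>j\<in>J. (norm (u j))\<^sup>2) * card J" by (rule sum_squared_le_sum_of_squares)
  finally show ?thesis by (simp add: mult.commute)
qed

lemma power2_norm_mean_le:
  fixes u :: "nat \<Rightarrow> 'a::real_normed_vector"
  shows "(norm ((1 / real N) *\<^sub>R (\<Sum>j<N. u j)))\<^sup>2 \<le> (1 / real N) * (\<Sum>j<N. (norm (u j))\<^sup>2)"
proof (cases "N = 0")
  case False
  have "(norm ((1 / real N) *\<^sub>R (\<Sum>j<N. u j)))\<^sup>2 = (1 / real N)\<^sup>2 * (norm (\<Sum>j<N. u j))\<^sup>2"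
    by (simp add: power_divide)
  also have "\<dots> \<le> (1 / real N)\<^sup>2 * (real N * (\<Sum>j<N. (norm (u j))\<^sup>2))"
    using power2_norm_sum_le[of u "{..<N}"] by (intro mult_left_mono) auto
  also have "\<dots> = (1 / real N) * (\<Sum>j<N. (norm (u j))\<^sup>2)" using False by (simp add: power2_eq_square)
  finally show ?thesis .
qed simp

lemma expectation_pmf_of_set:
  fixes h :: "'b \<Rightarrow> 'c::{banach, second_countable_topology}"
  assumes "finite A" "A \<noteq> {}"
  shows "measure_pmf.expectation (pmf_of_set A) h = (1 / real (card A)) *\<^sub>R (\<Sum>a\<in>A. h a)"
  using assms by (subst integral_measure_pmf[of A]) (auto simp: scaleR_sum_right)

lemma expectation_pmf_of_set_bij_betw:
  fixes h :: "'b \<Rightarrow> 'c::{banach, second_countable_topology}"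
  assumes "finite A" "A \<noteq> {}" "bij_betw \<rho> A A"
  shows "measure_pmf.expectation (pmf_of_set A) (\<lambda>a. h (\<rho> a)) = measure_pmf.expectation (pmf_of_set A) h"
  using assms by (simp add: expectation_pmf_of_set sum.reindex_bij_betw)

lemma expectation_mono_finite:
  fixes f g :: "_ \<Rightarrow> real"
  assumes "finite (set_pmf p)" "\<And>x. x \<in> set_pmf p \<Longrightarrow> f x \<le> g x"
  shows "measure_pmf.expectation p f \<le> measure_pmf.expectation p g"
  using assms by (intro integral_mono_AE integrable_measure_pmf_finite) (auto simp: AE_measure_pmf_iff)

lemma expectation_sum_finite:
  fixes f :: "_ \<Rightarrow> _ \<Rightarrow> 'c::{banach, second_countable_topology}"
  assumes "finite (set_pmf p)"
  shows "measure_pmf.expectation p (\<lambda>x. \<Sum>j\<in>J. f j x) = (\<Sum>j\<in>J. measure_pmf.expectation p (f j))"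
  using assms by (simp add: integral_sum integrable_measure_pmf_finite)

lemma expectation_bind_finite:
  fixes h :: "_ \<Rightarrow> 'c::{banach, second_countable_topology}"
  assumes "finite (set_pmf p)" "\<And>x. x \<in> set_pmf p \<Longrightarrow> finite (set_pmf (f x))"
  shows "measure_pmf.expectation (bind_pmf p f) h
       = measure_pmf.expectation p (\<lambda>x. measure_pmf.expectation (f x) h)"
proof -
  have "measure_pmf.expectation (bind_pmf p f) h
      = (\<Sum>a\<in>set_pmf p. pmf p a *\<^sub>R measure_pmf.expectation (f a) h)"
    by (rule pmf_expectation_bind) (use assms in auto)
  also have "\<dots> = measure_pmf.expectation p (\<lambda>x. measure_pmf.expectation (f x) h)"
    by (subst integral_measure_pmf[of "set_pmf p"]) (use assms in auto)
  finally show ?thesis .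
qed

lemma expectation_power2_norm_diff:
  fixes X :: "'b \<Rightarrow> 'c::euclidean_space"
  assumes "finite (set_pmf p)"
  shows "measure_pmf.expectation p (\<lambda>z. (norm (X z - c))\<^sup>2)
       = measure_pmf.expectation p (\<lambda>z. (norm (X z))\<^sup>2) - 2 * (c \<bullet> measure_pmf.expectation p X) + (norm c)\<^sup>2"
proof -
  have "measure_pmf.expectation p (\<lambda>z. (norm (X z - c))\<^sup>2)
      = measure_pmf.expectation p (\<lambda>z. (norm (X z))\<^sup>2 - 2 * (c \<bullet> X z) + (norm c)\<^sup>2)"
    by (simp add: power2_norm_eq_inner inner_diff_left inner_diff_right inner_commute algebra_simps)
  then show ?thesis using assms by (simp add: integrable_measure_pmf_finite)
qed

lemma expectation_power2_norm_sub_le: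
  fixes X :: "'b \<Rightarrow> 'c::euclidean_space"
  assumes "finite (set_pmf p)"
  shows "measure_pmf.expectation p (\<lambda>z. (norm (X z))\<^sup>2) - (norm (measure_pmf.expectation p X))\<^sup>2
       \<le> measure_pmf.expectation p (\<lambda>z. (norm (X z - c))\<^sup>2)"
proof -
  define E where "E = measure_pmf.expectation p X"
  have "0 \<le> (norm (E - c))\<^sup>2" by simp
  also have "\<dots> = (norm E)\<^sup>2 - 2 * (c \<bullet> E) + (norm c)\<^sup>2"
    unfolding power2_norm_eq_inner by (simp add: inner_diff_left inner_diff_right inner_commute)
  finally show ?thesis using expectation_power2_norm_diff[OF assms, of X c] unfolding E_def by linarith
qed

lemma power2_norm_expectation_le:
  fixes X :: "'b \<Rightarrow> 'c::euclidean_space"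
  assumes "finite (set_pmf p)"
  shows "(norm (measure_pmf.expectation p X))\<^sup>2 \<le> measure_pmf.expectation p (\<lambda>z. (norm (X z))\<^sup>2)"
proof -
  define E where "E = measure_pmf.expectation p X"
  have "0 \<le> measure_pmf.expectation p (\<lambda>z. (norm (X z - E))\<^sup>2)" by simp
  moreover have "(norm E)\<^sup>2 = E \<bullet> E" by (rule power2_norm_eq_inner)
  ultimately show ?thesis using expectation_power2_norm_diff[OF assms, of X E] unfolding E_def by linarith
qed

lemma permutes_pair_transport:
  assumes "i < N" "j < N" "i \<noteq> j" "i' < N" "j' < N" "i' \<noteq> j'"
  obtains \<tau> where "\<tau> permutes {..<N}" "\<tau> i' = i" "\<tau> j' = j"
proof -
  define t1 where "t1 = Transposition.transpose i' i"
  define j'' where "j'' = t1 j'"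
  have "j'' \<noteq> i" unfolding j''_def t1_def using assms by (auto simp: Transposition.transpose_def)
  define t2 where "t2 = Transposition.transpose j'' j"
  have p1: "t1 permutes {..<N}" unfolding t1_def using assms by (intro permutes_swap_id) auto
  have "j'' < N" unfolding j''_def using permutes_in_image[OF p1] assms by auto
  then have p2: "t2 permutes {..<N}" unfolding t2_def using assms by (intro permutes_swap_id) auto
  have "(t2 \<circ> t1) permutes {..<N}" by (rule permutes_compose[OF p1 p2])
  moreover have "(t2 \<circ> t1) i' = i" unfolding t2_def t1_def using \<open>j'' \<noteq> i\<close> assms
    by (auto simp: Transposition.transpose_def)
  moreover have "(t2 \<circ> t1) j' = j"
    unfolding t2_def using \<open>j'' \<noteq> i\<close> by (simp add: j''_def[symmetric] Transposition.transpose_def)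
  ultimately show ?thesis using that by blast
qed

lemma permutation_invariant_eq_mean:
  fixes F :: "nat \<Rightarrow> 'c::real_vector"
  assumes inv: "\<And>\<tau> i. \<tau> permutes {..<N} \<Longrightarrow> i < N \<Longrightarrow> F (\<tau> i) = F i" and "i < N"
  shows "F i = (1 / real N) *\<^sub>R (\<Sum>k<N. F k)"
proof -
  have e: "F k = F i" if "k < N" for k
  proof -
    have "Transposition.transpose k i permutes {..<N}" using that assms(2) by (intro permutes_swap_id) auto
    from inv[OF this that] show ?thesis by simp
  qed
  have "(\<Sum>k<N. F k) = (\<Sum>k<N. F i)" by (rule sum.cong) (use e in auto)
  then show ?thesis using assms(2) by (simp add: sum_constant_scaleR)
qed

lemma permutation_invariant_offdiag_eq:
  fixes F :: "nat \<Rightarrow> nat \<Rightarrow> real"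
  assumes inv: "\<And>\<tau> i j. \<tau> permutes {..<N} \<Longrightarrow> i < N \<Longrightarrow> j < N \<Longrightarrow> F (\<tau> i) (\<tau> j) = F i j"
    and "i < N" "j < N" "i \<noteq> j"
  shows "F i j = ((\<Sum>p<N. \<Sum>q<N. F p q) - (\<Sum>p<N. F p p)) / (real N * (real N - 1))"
proof -
  have offdiag: "F p q = F i j" if pq: "p < N" "q < N" "p \<noteq> q" for p q
  proof -
    obtain \<tau> where "\<tau> permutes {..<N}" "\<tau> i = p" "\<tau> j = q"
      by (rule permutes_pair_transport[OF pq assms(2-4)])
    with inv[of \<tau> i j] assms(2,3) show ?thesis by simp
  qed
  have "(\<Sum>p<N. \<Sum>q<N. F p q) - (\<Sum>p<N. F p p) = (\<Sum>p<N. (\<Sum>q<N. F p q) - F p p)"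
    by (simp add: sum_subtractf)
  also have "\<dots> = (\<Sum>p<N. \<Sum>q\<in>{..<N}-{p}. F p q)"
    by (intro sum.cong refl) (simp add: sum_diff1)
  also have "\<dots> = (\<Sum>p<N. \<Sum>q\<in>{..<N}-{p}. F i j)"
    by (intro sum.cong refl) (use offdiag in auto)
  also have "\<dots> = real N * (real N - 1) * F i j"
    using assms by (simp add: of_nat_diff)
  finally show ?thesis using assms by auto
qed

section \<open>Uniformly random permutations\<close>

lemma finite_perms: "finite (perms n)"
  unfolding perms_def by (rule finite_permutations) simp

lemma perms_nonempty: "perms n \<noteq> {}"
  unfolding perms_def using permutes_id by blast

lemma set_pmf_perms [simp]: "set_pmf (pmf_of_set (perms n)) = perms n"
  using finite_perms perms_nonempty by simp

lemma finite_set_pmf_perms: "finite (set_pmf (pmf_of_set (perms n)))"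
  by (simp add: finite_perms)

lemma expectation_perms_compose_right:
  fixes h :: "(nat \<Rightarrow> nat) \<Rightarrow> 'c::{banach, second_countable_topology}"
  assumes \<tau>: "\<tau> permutes {..<n}"
  shows "measure_pmf.expectation (pmf_of_set (perms n)) (\<lambda>\<pi>. h (\<pi> \<circ> \<tau>))
       = measure_pmf.expectation (pmf_of_set (perms n)) h"
proof (rule expectation_pmf_of_set_bij_betw[OF finite_perms perms_nonempty])
  show "bij_betw (\<lambda>\<pi>. \<pi> \<circ> \<tau>) (perms n) (perms n)"
  proof (rule bij_betwI[where g = "\<lambda>\<pi>. \<pi> \<circ> inv \<tau>"])
    show "(\<lambda>\<pi>. \<pi> \<circ> \<tau>) \<in> perms n \<rightarrow> perms n"
      unfolding perms_def using permutes_compose[OF \<tau>] by auto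
    show "(\<lambda>\<pi>. \<pi> \<circ> inv \<tau>) \<in> perms n \<rightarrow> perms n"
      unfolding perms_def using permutes_compose[OF permutes_inv[OF \<tau>]] by auto
  qed (simp_all add: o_assoc[symmetric] permutes_inv_o[OF \<tau>])
qed

lemma expectation_perms_sum_permuted:
  fixes \<phi> :: "nat \<Rightarrow> real"
  shows "measure_pmf.expectation (pmf_of_set (perms n)) (\<lambda>\<pi>. \<Sum>k<n. \<phi> (\<pi> k)) = (\<Sum>k<n. \<phi> k)"
proof -
  have "measure_pmf.expectation (pmf_of_set (perms n)) (\<lambda>\<pi>. \<Sum>k<n. \<phi> (\<pi> k))
      = measure_pmf.expectation (pmf_of_set (perms n)) (\<lambda>\<pi>. \<Sum>k<n. \<phi> k)"
    by (rule integral_cong_AE) (unfold AE_measure_pmf_iff set_pmf_perms,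
        use sum.permute[of _ "{..<n}" \<phi>] in \<open>auto simp: perms_def comp_def\<close>)
  then show ?thesis by simp
qed

lemma expectation_perms_component:
  fixes \<phi> :: "nat \<Rightarrow> real"
  assumes "j < n"
  shows "measure_pmf.expectation (pmf_of_set (perms n)) (\<lambda>\<pi>. \<phi> (\<pi> j)) = (\<Sum>k<n. \<phi> k) / real n"
proof -
  define F where "F j = measure_pmf.expectation (pmf_of_set (perms n)) (\<lambda>\<pi>. \<phi> (\<pi> j))" for j
  have inv: "F (\<tau> i) = F i" if "\<tau> permutes {..<n}" "i < n" for \<tau> i
    unfolding F_def using expectation_perms_compose_right[OF that(1), of "\<lambda>\<pi>. \<phi> (\<pi> i)"] by simp
  have "(\<Sum>k<n. F k) = measure_pmf.expectation (pmf_of_set (perms n)) (\<lambda>\<pi>. \<Sum>k<n. \<phi> (\<pi> k))"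
    unfolding F_def by (rule expectation_sum_finite[symmetric, OF finite_set_pmf_perms])
  also have "\<dots> = (\<Sum>k<n. \<phi> k)" by (rule expectation_perms_sum_permuted)
  moreover have "F j = (1 / real n) *\<^sub>R (\<Sum>k<n. F k)"
    by (rule permutation_invariant_eq_mean[OF _ assms]) (use inv in blast)
  ultimately show ?thesis unfolding F_def by simp
qed

lemma expectation_perms_pair:
  fixes \<psi> :: "nat \<Rightarrow> nat \<Rightarrow> real"
  assumes "j < n" "k < n" "j \<noteq> k"
  shows "measure_pmf.expectation (pmf_of_set (perms n)) (\<lambda>\<pi>. \<psi> (\<pi> j) (\<pi> k))
     = ((\<Sum>p<n. \<Sum>q<n. \<psi> p q) - (\<Sum>p<n. \<psi> p p)) / (real n * (real n - 1))"
proof -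
  define F where "F j k = measure_pmf.expectation (pmf_of_set (perms n)) (\<lambda>\<pi>. \<psi> (\<pi> j) (\<pi> k))" for j k
  have inv: "F (\<tau> i) (\<tau> i') = F i i'" if "\<tau> permutes {..<n}" "i < n" "i' < n" for \<tau> i i'
    unfolding F_def using expectation_perms_compose_right[OF that(1), of "\<lambda>\<pi>. \<psi> (\<pi> i) (\<pi> i')"]
    by simp
  have "(\<Sum>p<n. \<Sum>q<n. F p q) = (\<Sum>p<n. \<Sum>q<n. \<psi> p q)"
  proof -
    have "(\<Sum>p<n. \<Sum>q<n. \<psi> (\<pi> p) (\<pi> q)) = (\<Sum>p<n. \<Sum>q<n. \<psi> p q)" if "\<pi> permutes {..<n}" for \<pi>
      using sum.permute[OF that, of "\<lambda>p. \<Sum>q<n. \<psi> p (\<pi> q)"] sum.permute[OF that, of "\<psi> _"]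
      by (simp add: comp_def)
    then have "measure_pmf.expectation (pmf_of_set (perms n)) (\<lambda>\<pi>. \<Sum>p<n. \<Sum>q<n. \<psi> (\<pi> p) (\<pi> q))
        = (\<Sum>p<n. \<Sum>q<n. \<psi> p q)"
      by (subst integral_cong_AE[where g = "\<lambda>_. \<Sum>p<n. \<Sum>q<n. \<psi> p q"])
        (unfold AE_measure_pmf_iff set_pmf_perms, auto simp: perms_def)
    then show ?thesis unfolding F_def by (simp add: expectation_sum_finite finite_perms)
  qed
  moreover have "(\<Sum>p<n. F p p)
      = measure_pmf.expectation (pmf_of_set (perms n)) (\<lambda>\<pi>. \<Sum>p<n. \<psi> (\<pi> p) (\<pi> p))"
    unfolding F_def by (rule expectation_sum_finite[symmetric, OF finite_set_pmf_perms])
  then have "(\<Sum>p<n. F p p) = (\<Sum>p<n. \<psi> p p)"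
    using expectation_perms_sum_permuted[where \<phi> = "\<lambda>p. \<psi> p p"] by simp
  moreover have "F j k = ((\<Sum>p<n. \<Sum>q<n. F p q) - (\<Sum>p<n. F p p)) / (real n * (real n - 1))"
    by (rule permutation_invariant_offdiag_eq[OF _ assms]) (use inv in blast)
  ultimately show ?thesis unfolding F_def by simp
qed

lemma prefix_sample_coeff_le:
  fixes i n :: nat and S B :: real
  assumes "1 \<le> i" "i < n" "S \<ge> 0" "B \<ge> 0"
  shows "real i * S / real n + (real i * real i - real i) * ((B - S) / (real n * (real n - 1))) \<le> S / 2 + B"
proof -
  define I where "I = real i"
  define N where "N = real n"
  have I1: "1 \<le> I" and IN: "I + 1 \<le> N" using assms unfolding I_def N_def by auto
  have pos: "N * (N - 1) > 0" using I1 IN by simp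
  define \<alpha> where "\<alpha> = (I * I - I) / (N * (N - 1))"
  have a0: "0 \<le> \<alpha>" unfolding \<alpha>_def using I1 pos by (intro divide_nonneg_pos) (auto simp: algebra_simps)
  have "I * (I - 1) \<le> N * (N - 1)" using I1 IN by (intro mult_mono) auto
  then have a1: "\<alpha> \<le> 1" unfolding \<alpha>_def using pos by (subst divide_le_eq_1_pos) (auto simp: algebra_simps)
  have b: "I / N - \<alpha> = I * (N - I) / (N * (N - 1))"
    unfolding \<alpha>_def using pos IN I1 by (simp add: field_simps)
  have "0 \<le> (N - 2 * I)\<^sup>2" by simp
  then have "4 * (I * (N - I)) \<le> N * N" by (simp add: power2_eq_square algebra_simps)
  moreover have "N * 2 \<le> N * N" using I1 IN by (intro mult_left_mono) auto
  ultimately have "2 * (I * (N - I)) \<le> N * (N - 1)" by (simp add: algebra_simps)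
  then have b1: "I / N - \<alpha> \<le> 1 / 2" unfolding b using pos by (simp add: field_simps)
  have "real i * S / real n + (real i * real i - real i) * ((B - S) / (real n * (real n - 1)))
      = S * (I / N - \<alpha>) + B * \<alpha>"
    unfolding \<alpha>_def I_def N_def by (simp add: diff_divide_distrib algebra_simps)
  also have "\<dots> \<le> S * (1/2) + B * 1"
    using assms a0 a1 b1 by (intro add_mono mult_left_mono) auto
  finally show ?thesis by simp
qed

text \<open>The cross terms are evaluated with the pair marginal of a uniform permutation, i.e. by sampling
  without replacement.\<close>
lemma expectation_perms_prefix_sum_sq_le:
  fixes b :: "nat \<Rightarrow> 'c::euclidean_space"
  assumes "i < n"
  shows "measure_pmf.expectation (pmf_of_set (perms n)) (\<lambda>\<pi>. (norm (\<Sum>j<i. b (\<pi> j)))\<^sup>2)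
     \<le> (1/2) * (\<Sum>k<n. (norm (b k))\<^sup>2) + (norm (\<Sum>k<n. b k))\<^sup>2"
proof (cases "i = 0")
  case False
  define S where "S = (\<Sum>k<n. (norm (b k))\<^sup>2)"
  define B where "B = (norm (\<Sum>k<n. b k))\<^sup>2"
  define G where "G j k = measure_pmf.expectation (pmf_of_set (perms n)) (\<lambda>\<pi>. b (\<pi> j) \<bullet> b (\<pi> k))"
    for j k
  have diag: "G j j = S / real n" if "j < n" for j
    unfolding G_def S_def power2_norm_eq_inner by (rule expectation_perms_component[OF that])
  have offdiag: "G j k = (B - S) / (real n * (real n - 1))" if "j < n" "k < n" "j \<noteq> k" for j k
  proof -
    have "G j k = ((\<Sum>p<n. \<Sum>q<n. b p \<bullet> b q) - (\<Sum>p<n. b p \<bullet> b p)) / (real n * (real n - 1))"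
      unfolding G_def by (rule expectation_perms_pair[OF that, of "\<lambda>p q. b p \<bullet> b q"])
    then show ?thesis unfolding S_def B_def power2_norm_sum by (simp add: power2_norm_eq_inner)
  qed
  have "measure_pmf.expectation (pmf_of_set (perms n)) (\<lambda>\<pi>. (norm (\<Sum>j<i. b (\<pi> j)))\<^sup>2)
      = (\<Sum>j<i. \<Sum>k<i. G j k)"
    unfolding power2_norm_sum G_def by (simp add: expectation_sum_finite finite_perms)
  also have "\<dots> = (\<Sum>j<i. G j j + (\<Sum>k\<in>{..<i}-{j}. G j k))"
    by (intro sum.cong refl) (simp add: sum.remove[of "{..<i}"])
  also have "\<dots> = (\<Sum>j<i. S / real n + (\<Sum>k\<in>{..<i}-{j}. (B - S) / (real n * (real n - 1))))"
    using assms by (intro sum.cong refl arg_cong2[where f = "(+)"]) (auto simp: diag offdiag)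
  also have "\<dots> = real i * S / real n + (real i * real i - real i) * ((B - S) / (real n * (real n - 1)))"
    using False by (simp add: of_nat_diff algebra_simps)
  also have "\<dots> \<le> S / 2 + B"
    by (rule prefix_sample_coeff_le) (use False assms in \<open>auto simp: S_def B_def intro: sum_nonneg\<close>)
  finally show ?thesis unfolding S_def B_def by simp
qed (simp add: sum_nonneg)

section \<open>Uniformly random cohorts\<close>

lemma finite_cohorts: "finite (cohorts M C)"
  unfolding cohorts_def by (rule finite_subset[of _ "Pow {..<M}"]) auto

lemma cohorts_nonempty: "C \<le> M \<Longrightarrow> cohorts M C \<noteq> {}"
proof -
  assume "C \<le> M"
  then have "{..<C} \<in> cohorts M C" unfolding cohorts_def by auto
  then show ?thesis by blast
qed

lemma set_pmf_cohorts: "C \<le> M \<Longrightarrow> set_pmf (pmf_of_set (cohorts M C)) = cohorts M C"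
  using finite_cohorts cohorts_nonempty by simp

lemma finite_set_pmf_cohorts: "C \<le> M \<Longrightarrow> finite (set_pmf (pmf_of_set (cohorts M C)))"
  by (simp add: set_pmf_cohorts finite_cohorts)

lemma cohorts_finite_member: "S \<in> cohorts M C \<Longrightarrow> finite S"
  unfolding cohorts_def by (auto intro: finite_subset)

lemma expectation_cohorts_image_permutes:
  fixes h :: "nat set \<Rightarrow> 'c::{banach, second_countable_topology}"
  assumes \<tau>: "\<tau> permutes {..<M}" and "C \<le> M"
  shows "measure_pmf.expectation (pmf_of_set (cohorts M C)) (\<lambda>S. h (\<tau> ` S))
       = measure_pmf.expectation (pmf_of_set (cohorts M C)) h"
proof (rule expectation_pmf_of_set_bij_betw[OF finite_cohorts cohorts_nonempty[OF assms(2)]])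
  have image_mem: "\<sigma> ` S \<in> cohorts M C" if \<sigma>: "\<sigma> permutes {..<M}" and S: "S \<in> cohorts M C" for \<sigma> S
  proof -
    have "\<sigma> ` S \<subseteq> \<sigma> ` {..<M}" using S by (auto simp: cohorts_def)
    then have "\<sigma> ` S \<subseteq> {..<M}" by (simp add: permutes_image[OF \<sigma>])
    moreover have "card (\<sigma> ` S) = card S"
      using permutes_inj[OF \<sigma>] by (auto simp: card_image inj_on_def)
    ultimately show ?thesis using S by (auto simp: cohorts_def)
  qed
  show "bij_betw ((`) \<tau>) (cohorts M C) (cohorts M C)"
  proof (rule bij_betwI[where g = "\<lambda>S. inv \<tau> ` S"])
    show "(`) \<tau> \<in> cohorts M C \<rightarrow> cohorts M C" using image_mem[OF \<tau>] by auto
    show "(`) (inv \<tau>) \<in> cohorts M C \<rightarrow> cohorts M C" using image_mem[OF permutes_inv[OF \<tau>]] by auto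
  qed (simp_all add: image_comp permutes_inv_o[OF \<tau>])
qed

lemma sum_eq_sum_indicator_scaleR:
  fixes a :: "nat \<Rightarrow> 'c::real_vector"
  assumes "S \<subseteq> {..<M}"
  shows "(\<Sum>m\<in>S. a m) = (\<Sum>m<M. (indicator S m :: real) *\<^sub>R a m)"
proof -
  have "{m \<in> {..<M}. m \<in> S} = S" using assms by auto
  then show ?thesis by simp
qed

lemma sum_indicator_real_eq_card:
  assumes "finite A" "S \<subseteq> A"
  shows "(\<Sum>i\<in>A. indicator S i :: real) = real (card S)"
  using assms unfolding indicator_def of_bool_def by (simp add: sum.If_cases Int_absorb1 Int_commute)

lemma expectation_cohorts_indicator:
  assumes "i < M" "C \<le> M"
  shows "measure_pmf.expectation (pmf_of_set (cohorts M C)) (\<lambda>S. indicator S i) = real C / real M"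
proof -
  define F where "F i = measure_pmf.expectation (pmf_of_set (cohorts M C)) (\<lambda>S. indicator S i :: real)"
    for i
  have inv: "F (\<tau> i) = F i" if \<tau>: "\<tau> permutes {..<M}" for \<tau> i
    using expectation_cohorts_image_permutes[OF \<tau> assms(2), of "\<lambda>S. indicator S (\<tau> i) :: real"]
    unfolding F_def by (simp add: indicator_image permutes_inj[OF \<tau>])
  have "(\<Sum>k<M. F k) = measure_pmf.expectation (pmf_of_set (cohorts M C)) (\<lambda>S. \<Sum>k<M. indicator S k)"
    unfolding F_def by (rule expectation_sum_finite[symmetric, OF finite_set_pmf_cohorts[OF assms(2)]])
  also have "\<dots> = measure_pmf.expectation (pmf_of_set (cohorts M C)) (\<lambda>S. real C)"
    by (rule integral_cong_AE)
      (unfold AE_measure_pmf_iff set_pmf_cohorts[OF assms(2)],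
        auto simp: cohorts_def sum_indicator_real_eq_card)
  finally have "(\<Sum>k<M. F k) = real C" by simp
  moreover have "F i = (1 / real M) *\<^sub>R (\<Sum>k<M. F k)"
    by (rule permutation_invariant_eq_mean[OF _ assms(1)]) (use inv in blast)
  ultimately show ?thesis unfolding F_def by simp
qed

lemma expectation_cohorts_indicator_pair:
  assumes "i < M" "j < M" "i \<noteq> j" "C \<le> M"
  shows "measure_pmf.expectation (pmf_of_set (cohorts M C)) (\<lambda>S. indicator S i * indicator S j)
       = (real C * real C - real C) / (real M * (real M - 1))"
proof -
  define F where "F i j = measure_pmf.expectation (pmf_of_set (cohorts M C))
      (\<lambda>S. indicator S i * indicator S j :: real)" for i j
  have inv: "F (\<tau> i) (\<tau> j) = F i j" if \<tau>: "\<tau> permutes {..<M}" for \<tau> i j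
    using expectation_cohorts_image_permutes[OF \<tau> assms(4), of "\<lambda>S. indicator S (\<tau> i) * indicator S (\<tau> j) :: real"]
    unfolding F_def by (simp add: indicator_image permutes_inj[OF \<tau>])
  have card_sq: "(\<Sum>p<M. \<Sum>q<M. indicator S p * indicator S q) = real C * real C"
    if "S \<in> cohorts M C" for S
  proof -
    have "S \<subseteq> {..<M}" "card S = C" using that by (auto simp: cohorts_def)
    then show ?thesis
      by (simp add: sum_distrib_left[symmetric] sum_distrib_right[symmetric] sum_indicator_real_eq_card)
  qed
  have "(\<Sum>p<M. \<Sum>q<M. F p q) = measure_pmf.expectation (pmf_of_set (cohorts M C))
      (\<lambda>S. \<Sum>p<M. \<Sum>q<M. indicator S p * indicator S q)"
    unfolding F_def by (simp only: expectation_sum_finite[OF finite_set_pmf_cohorts[OF assms(4)]])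
  also have "\<dots> = measure_pmf.expectation (pmf_of_set (cohorts M C)) (\<lambda>S. real C * real C)"
    by (rule integral_cong_AE)
      (simp, simp, unfold AE_measure_pmf_iff set_pmf_cohorts[OF assms(4)], use card_sq in blast)
  finally have "(\<Sum>p<M. \<Sum>q<M. F p q) = real C * real C" by simp
  moreover have "(\<Sum>p<M. F p p) = real C"
    using expectation_cohorts_indicator[OF _ assms(4)] assms
    by (simp add: F_def mult_indicator_subset[OF subset_refl])
  moreover have "F i j = ((\<Sum>p<M. \<Sum>q<M. F p q) - (\<Sum>p<M. F p p)) / (real M * (real M - 1))"
    by (rule permutation_invariant_offdiag_eq[OF _ assms(1-3)]) (use inv in blast)
  ultimately show ?thesis unfolding F_def by simp
qed

lemma expectation_cohorts_sum:
  fixes a :: "nat \<Rightarrow> 'c::{banach, second_countable_topology}"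
  assumes "C \<le> M"
  shows "measure_pmf.expectation (pmf_of_set (cohorts M C)) (\<lambda>S. \<Sum>m\<in>S. a m)
       = (real C / real M) *\<^sub>R (\<Sum>m<M. a m)"
proof -
  have "measure_pmf.expectation (pmf_of_set (cohorts M C)) (\<lambda>S. \<Sum>m\<in>S. a m)
      = measure_pmf.expectation (pmf_of_set (cohorts M C)) (\<lambda>S. \<Sum>m<M. indicator S m *\<^sub>R a m)"
    by (rule integral_cong_AE) (unfold AE_measure_pmf_iff set_pmf_cohorts[OF assms],
        auto simp: cohorts_def sum_eq_sum_indicator_scaleR simp del: sum_indicator_scaleR)
  also have "\<dots> = (\<Sum>m<M. measure_pmf.expectation (pmf_of_set (cohorts M C)) (\<lambda>S. indicator S m) *\<^sub>R a m)"
    by (simp add: expectation_sum_finite finite_set_pmf_cohorts[OF assms] integrable_measure_pmf_finite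
        del: sum_indicator_scaleR)
  also have "\<dots> = (\<Sum>m<M. (real C / real M) *\<^sub>R a m)"
    by (simp add: expectation_cohorts_indicator[OF _ assms])
  finally show ?thesis by (simp add: scaleR_sum_right)
qed

lemma expectation_cohorts_mean_sq:
  fixes w :: "nat \<Rightarrow> 'c::euclidean_space"
  assumes "C \<le> M"
  shows "measure_pmf.expectation (pmf_of_set (cohorts M C)) (\<lambda>S. (norm ((1 / real C) *\<^sub>R (\<Sum>m\<in>S. w m)))\<^sup>2)
     = (1 / (real C)\<^sup>2) * (real C / real M * (\<Sum>m<M. (norm (w m))\<^sup>2)
        + (real C * real C - real C) / (real M * (real M - 1))
          * ((norm (\<Sum>m<M. w m))\<^sup>2 - (\<Sum>m<M. (norm (w m))\<^sup>2)))"
proof -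
  define p2 where "p2 = (real C * real C - real C) / (real M * (real M - 1))"
  define G where "G p q = measure_pmf.expectation (pmf_of_set (cohorts M C))
      (\<lambda>S. indicator S p * indicator S q) * (w p \<bullet> w q)" for p q
  have "measure_pmf.expectation (pmf_of_set (cohorts M C)) (\<lambda>S. (norm ((1 / real C) *\<^sub>R (\<Sum>m\<in>S. w m)))\<^sup>2)
     = measure_pmf.expectation (pmf_of_set (cohorts M C))
         (\<lambda>S. (1 / (real C)\<^sup>2) * (\<Sum>p<M. \<Sum>q<M. indicator S p * indicator S q * (w p \<bullet> w q)))"
  proof (rule integral_cong_AE)
    show "AE S in measure_pmf (pmf_of_set (cohorts M C)).
        (norm ((1 / real C) *\<^sub>R (\<Sum>m\<in>S. w m)))\<^sup>2
        = (1 / (real C)\<^sup>2) * (\<Sum>p<M. \<Sum>q<M. indicator S p * indicator S q * (w p \<bullet> w q))"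
      unfolding AE_measure_pmf_iff set_pmf_cohorts[OF assms]
    proof
      fix S assume "S \<in> cohorts M C"
      then have "(\<Sum>m\<in>S. w m) = (\<Sum>m<M. indicator S m *\<^sub>R w m)"
        by (intro sum_eq_sum_indicator_scaleR) (auto simp: cohorts_def)
      then show "(norm ((1 / real C) *\<^sub>R (\<Sum>m\<in>S. w m)))\<^sup>2
          = (1 / (real C)\<^sup>2) * (\<Sum>p<M. \<Sum>q<M. indicator S p * indicator S q * (w p \<bullet> w q))"
        by (simp add: power2_norm_sum power_mult_distrib mult_ac power_divide del: sum_indicator_scaleR)
    qed
  qed auto
  also have "\<dots> = (1 / (real C)\<^sup>2) * (\<Sum>p<M. \<Sum>q<M. G p q)"
    unfolding G_def by (simp add: expectation_sum_finite finite_cohorts set_pmf_cohorts[OF assms])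
  also have "(\<Sum>p<M. \<Sum>q<M. G p q) = (\<Sum>p<M. G p p + (\<Sum>q\<in>{..<M}-{p}. G p q))"
    by (intro sum.cong refl) (simp add: sum.remove[of "{..<M}"])
  also have "(\<Sum>p<M. G p p + (\<Sum>q\<in>{..<M}-{p}. G p q))
      = (\<Sum>p<M. real C / real M * (w p \<bullet> w p) + (\<Sum>q\<in>{..<M}-{p}. p2 * (w p \<bullet> w q)))"
    unfolding G_def p2_def using assms
    by (intro sum.cong refl arg_cong2[where f = "(+)"])
      (auto simp: expectation_cohorts_indicator expectation_cohorts_indicator_pair
        mult_indicator_subset[OF subset_refl])
  also have "\<dots> = real C / real M * (\<Sum>m<M. (norm (w m))\<^sup>2)
      + p2 * ((norm (\<Sum>m<M. w m))\<^sup>2 - (\<Sum>m<M. (norm (w m))\<^sup>2))"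
    unfolding power2_norm_sum
    by (simp add: power2_norm_eq_inner sum.distrib sum_distrib_left sum_diff1 sum_subtractf
        right_diff_distrib)
  finally show ?thesis unfolding p2_def .
qed

lemma cohorts_one_one: "cohorts (Suc 0) (Suc 0) = {{0}}"
  unfolding cohorts_def by (auto simp: card_1_singleton_iff)

lemma cohort_variance_coeff_le:
  fixes C M :: nat and S B :: real
  assumes "1 \<le> C" "C \<le> M" "2 \<le> M" "S \<ge> 0" "B \<ge> 0"
  shows "(1 / (real C)\<^sup>2) * (real C / real M * S + (real C * real C - real C) / (real M * (real M - 1)) * (B - S))
      \<le> B / (real M)\<^sup>2 + real (M - C) / (real C * real (max (M - 1) 1)) * (S / real M)"
proof -
  define c where "c = real C"
  define m where "m = real M"
  have c1: "1 \<le> c" and cm: "c \<le> m" and m2: "2 \<le> m" using assms unfolding c_def m_def by auto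
  have mx: "real (max (M - 1) 1) = m - 1" using assms unfolding m_def by (simp add: max_absorb1 of_nat_diff)
  have mc: "real (M - C) = m - c" using assms unfolding m_def c_def by (simp add: of_nat_diff)
  have eq: "(1 / c\<^sup>2) * (c / m * S + (c * c - c) / (m * (m - 1)) * (B - S))
      = (m - c) / (c * (m - 1)) * (S / m) + B * ((c - 1) / (c * m * (m - 1)))"
  proof -
    define u where "u = 1 / c"
    define v where "v = 1 / m"
    define w where "w = 1 / (m - 1)"
    have r: "u * c = 1" "v * m = 1" "w * (m - 1) = 1" using c1 m2 unfolding u_def v_def w_def by auto
    have "(1 / c\<^sup>2) * (c / m * S + (c * c - c) / (m * (m - 1)) * (B - S))
        = u * u * (c * v * S + (c * c - c) * (v * w) * (B - S))"
      unfolding u_def v_def w_def by (simp add: field_simps power2_eq_square)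
    moreover have "(m - c) / (c * (m - 1)) * (S / m) + B * ((c - 1) / (c * m * (m - 1)))
        = (m - c) * (u * w) * (S * v) + B * ((c - 1) * (u * v * w))"
      unfolding u_def v_def w_def by (simp add: field_simps)
    ultimately show ?thesis using r by algebra
  qed
  have "(c - 1) * m * m \<le> c * (m - 1) * m" using cm m2 by (intro mult_right_mono) (auto simp: algebra_simps)
  then have "(c - 1) / (c * m * (m - 1)) \<le> 1 / (m * m)"
    using c1 m2 by (simp add: field_simps)
  then have "B * ((c - 1) / (c * m * (m - 1))) \<le> B * (1 / (m * m))"
    using assms by (intro mult_left_mono) auto
  then show ?thesis unfolding c_def[symmetric] m_def[symmetric] mx mc eq
    by (simp add: power2_eq_square)
qed

text \<open>The variance factor of sampling a cohort of size \<open>C\<close> out of \<open>M\<close> without replacement; the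
  \<open>max\<close> only matters for \<open>M = 1\<close>, where the factor vanishes anyway.\<close>
definition cohort_factor :: "nat \<Rightarrow> nat \<Rightarrow> real" where
  "cohort_factor M C = real (M - C) / (real C * real (max (M - 1) 1))"

lemma cohort_factor_nonneg: "0 \<le> cohort_factor M C"
  unfolding cohort_factor_def by simp

lemma cohort_factor_le_1:
  assumes "1 \<le> C"
  shows "cohort_factor M C \<le> 1"
proof -
  have "M - C \<le> max (M - 1) 1" using assms by simp
  also have "\<dots> \<le> C * max (M - 1) 1" using mult_le_mono1[OF assms, of "max (M - 1) 1"] by simp
  finally have "real (M - C) \<le> real C * real (max (M - 1) 1)" by (metis of_nat_le_iff of_nat_mult)
  moreover have "real C * real (max (M - 1) 1) > 0" using assms by simp
  ultimately show ?thesis unfolding cohort_factor_def by simp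
qed

lemma expectation_cohorts_mean_sq_le:
  fixes w :: "nat \<Rightarrow> 'c::euclidean_space"
  assumes "1 \<le> C" "C \<le> M"
  shows "measure_pmf.expectation (pmf_of_set (cohorts M C)) (\<lambda>S. (norm ((1 / real C) *\<^sub>R (\<Sum>m\<in>S. w m)))\<^sup>2)
     \<le> (norm ((1 / real M) *\<^sub>R (\<Sum>m<M. w m)))\<^sup>2
       + cohort_factor M C * ((1 / real M) * (\<Sum>m<M. (norm (w m))\<^sup>2))"
proof (cases "M = 1")
  case True
  then have "C = 1" using assms by simp
  with True show ?thesis by (simp add: cohorts_one_one pmf_of_set_singleton cohort_factor_def)
next
  case False
  then have "2 \<le> M" using assms by simp
  have "measure_pmf.expectation (pmf_of_set (cohorts M C)) (\<lambda>S. (norm ((1 / real C) *\<^sub>R (\<Sum>m\<in>S. w m)))\<^sup>2)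
      \<le> (norm (\<Sum>m<M. w m))\<^sup>2 / (real M)\<^sup>2
        + real (M - C) / (real C * real (max (M - 1) 1)) * ((\<Sum>m<M. (norm (w m))\<^sup>2) / real M)"
    unfolding expectation_cohorts_mean_sq[OF assms(2)]
    by (rule cohort_variance_coeff_le) (use assms \<open>2 \<le> M\<close> in \<open>auto intro: sum_nonneg\<close>)
  then show ?thesis by (simp add: power_mult_distrib power_divide cohort_factor_def)
qed

lemma finite_set_Pi_pmf_const:
  "finite S \<Longrightarrow> finite (set_pmf Q) \<Longrightarrow> finite (set_pmf (Pi_pmf S d (\<lambda>_. Q)))"
  by (simp add: set_Pi_pmf finite_PiE_dflt)

lemma expectation_Pi_pmf_component:
  fixes h :: "'b \<Rightarrow> 'c::{banach, second_countable_topology}"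
  assumes "finite S" "m \<in> S"
  shows "measure_pmf.expectation (Pi_pmf S d (\<lambda>_. Q)) (\<lambda>\<pi>. h (\<pi> m)) = measure_pmf.expectation Q h"
proof -
  have "map_pmf (\<lambda>\<pi>. \<pi> m) (Pi_pmf S d (\<lambda>_. Q)) = Q"
    using Pi_pmf_component[OF assms(1), of m d "\<lambda>_. Q"] assms(2) by simp
  then show ?thesis by (metis integral_map_pmf)
qed

lemma expectation_Pi_pmf_sum:
  fixes u :: "'i \<Rightarrow> 'b \<Rightarrow> 'c::{banach, second_countable_topology}"
  assumes "finite S" "finite (set_pmf Q)"
  shows "measure_pmf.expectation (Pi_pmf S d (\<lambda>_. Q)) (\<lambda>\<pi>. \<Sum>m\<in>S. u m (\<pi> m))
       = (\<Sum>m\<in>S. measure_pmf.expectation Q (u m))"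
  using assms by (simp add: expectation_sum_finite finite_set_Pi_pmf_const expectation_Pi_pmf_component)

lemma expectation_Pi_pmf_sum_sq:
  fixes u :: "'i \<Rightarrow> 'b \<Rightarrow> 'c::euclidean_space"
  assumes "finite S" and Q: "finite (set_pmf Q)"
  shows "measure_pmf.expectation (Pi_pmf S d (\<lambda>_. Q)) (\<lambda>\<pi>. (norm (\<Sum>m\<in>S. u m (\<pi> m)))\<^sup>2)
       = (norm (\<Sum>m\<in>S. measure_pmf.expectation Q (u m)))\<^sup>2
         + (\<Sum>m\<in>S. measure_pmf.expectation Q (\<lambda>p. (norm (u m p))\<^sup>2)
                   - (norm (measure_pmf.expectation Q (u m)))\<^sup>2)"
  using assms(1)
proof (induction S rule: finite_induct)
  case (insert a S)
  define P where "P = Pi_pmf S d (\<lambda>_. Q)"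
  define w where "w m = measure_pmf.expectation Q (u m)" for m
  define R where "R f = (\<Sum>m\<in>S. u m (f m))" for f
  have P: "finite (set_pmf P)" unfolding P_def by (rule finite_set_Pi_pmf_const[OF insert(1) Q])
  have sum_upd: "(\<Sum>m\<in>insert a S. u m (if m = a then y else f m)) = u a y + R f" for f y
  proof -
    have "(\<Sum>m\<in>S. u m (if m = a then y else f m)) = R f" unfolding R_def
      by (intro sum.cong refl) (use insert(2) in auto)
    then show ?thesis using insert(1,2) by simp
  qed
  have mean_R: "measure_pmf.expectation P R = (\<Sum>m\<in>S. w m)"
    unfolding P_def R_def w_def by (rule expectation_Pi_pmf_sum[OF insert(1) Q])
  have "Pi_pmf (insert a S) d (\<lambda>_. Q) = Q \<bind> (\<lambda>y. map_pmf (\<lambda>f. f(a := y)) P)"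
    unfolding P_def Pi_pmf_insert'[OF insert(1,2)] by (simp add: map_pmf_def)
  then have "measure_pmf.expectation (Pi_pmf (insert a S) d (\<lambda>_. Q)) (\<lambda>\<pi>. (norm (\<Sum>m\<in>insert a S. u m (\<pi> m)))\<^sup>2)
      = measure_pmf.expectation Q (\<lambda>y. measure_pmf.expectation P (\<lambda>f. (norm (u a y + R f))\<^sup>2))"
    by (simp only:) (subst expectation_bind_finite, use Q P in \<open>auto simp: sum_upd\<close>)
  also have "\<dots> = measure_pmf.expectation Q (\<lambda>y. (norm (u a y))\<^sup>2 + 2 * (u a y \<bullet> (\<Sum>m\<in>S. w m))
        + measure_pmf.expectation P (\<lambda>f. (norm (R f))\<^sup>2))"
    unfolding power2_norm_add using P
    by (simp add: integrable_measure_pmf_finite mean_R[symmetric])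
  also have "\<dots> = measure_pmf.expectation Q (\<lambda>y. (norm (u a y))\<^sup>2) + 2 * (w a \<bullet> (\<Sum>m\<in>S. w m))
        + measure_pmf.expectation P (\<lambda>f. (norm (R f))\<^sup>2)"
    using Q by (simp add: integrable_measure_pmf_finite w_def)
  also have "measure_pmf.expectation P (\<lambda>f. (norm (R f))\<^sup>2)
      = (norm (\<Sum>m\<in>S. w m))\<^sup>2 + (\<Sum>m\<in>S. measure_pmf.expectation Q (\<lambda>p. (norm (u m p))\<^sup>2) - (norm (w m))\<^sup>2)"
    unfolding P_def R_def w_def by (rule insert(3))
  finally show ?case using insert(1,2)
    by (simp add: w_def[symmetric] power2_norm_add algebra_simps)
qed simp

lemma client_fun_real_eq:
  fixes f :: "nat \<Rightarrow> nat \<Rightarrow> 'a \<Rightarrow> real"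
  shows "client_fun n f m x = (1 / real n) * (\<Sum>k<n. f m k x)"
  by (simp add: client_fun_def)

lemma bregman_div_client_fun:
  "bregman_div (client_fun n f m) (client_fun n g m) x z = (1 / real n) * (\<Sum>k<n. bregman_div (f m k) (g m k) x z)"
  unfolding bregman_div_def client_fun_def
  by (simp add: sum_subtractf inner_sum_left right_diff_distrib)

lemma local_iter_eq_sum:
  "local_iter g \<gamma> m \<pi> x i = x - \<gamma> *\<^sub>R (\<Sum>j<i. g m (\<pi> j) (local_iter g \<gamma> m \<pi> x j))"
  by (induction i) (simp_all add: Let_def algebra_simps)

section \<open>One client: a shuffled local epoch\<close>

locale smooth_convex_clients =
  fixes f :: "nat \<Rightarrow> nat \<Rightarrow> 'a::euclidean_space \<Rightarrow> real" and g :: "nat \<Rightarrow> nat \<Rightarrow> 'a \<Rightarrow> 'a"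
    and M n :: nat and L :: real
  assumes n_pos: "n \<ge> 1" and M_pos: "M \<ge> 1"
    and grad: "\<And>m i x. m < M \<Longrightarrow> i < n \<Longrightarrow> (f m i has_derivative (\<lambda>h. g m i x \<bullet> h)) (at x)"
    and cvx: "\<And>m i. m < M \<Longrightarrow> i < n \<Longrightarrow> convex_on UNIV (f m i)"
    and smooth: "\<And>m i. m < M \<Longrightarrow> i < n \<Longrightarrow> L_smooth_grad (g m i) L"
    and L_pos: "L > 0"
begin

abbreviation client_bregman :: "nat \<Rightarrow> 'a \<Rightarrow> 'a \<Rightarrow> real" where
  "client_bregman m \<equiv> bregman_div (client_fun n f m) (client_fun n g m)"

definition pseudo_grad :: "nat \<Rightarrow> (nat \<Rightarrow> nat) \<Rightarrow> real \<Rightarrow> 'a \<Rightarrow> 'a" where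
  "pseudo_grad m \<pi> \<gamma> x = (1 / (\<gamma> * real n)) *\<^sub>R (x - local_iter g \<gamma> m \<pi> x n)"

definition local_drift :: "nat \<Rightarrow> (nat \<Rightarrow> nat) \<Rightarrow> real \<Rightarrow> 'a \<Rightarrow> real" where
  "local_drift m \<pi> \<gamma> x = (1 / real n) * (\<Sum>i<n. (norm (local_iter g \<gamma> m \<pi> x i - x))\<^sup>2)"

lemma local_drift_nonneg: "0 \<le> local_drift m \<pi> \<gamma> x"
  unfolding local_drift_def by (simp add: sum_nonneg)

lemma component_grad_diff_sq_le:
  assumes "m < M" "k < n"
  shows "(norm (g m k y - g m k x))\<^sup>2 \<le> L\<^sup>2 * (norm (y - x))\<^sup>2"
proof -
  have "norm (g m k y - g m k x) \<le> L * norm (y - x)"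
    using smooth[OF assms] unfolding L_smooth_grad_def by blast
  then have "(norm (g m k y - g m k x))\<^sup>2 \<le> (L * norm (y - x))\<^sup>2"
    by (intro power_mono) auto
  then show ?thesis by (simp add: power_mult_distrib)
qed

lemma sum_component_grad_diff_sq_le:
  assumes "m < M"
  shows "(\<Sum>k<n. (norm (g m k x - g m k z))\<^sup>2) \<le> 2 * L * (real n * client_bregman m x z)"
proof -
  have "(\<Sum>k<n. (norm (g m k x - g m k z))\<^sup>2) \<le> (\<Sum>k<n. 2 * L * bregman_div (f m k) (g m k) x z)"
    using assms by (intro sum_mono L_smooth_convex_cocoercive grad cvx smooth L_pos) auto
  also have "\<dots> = 2 * L * (real n * client_bregman m x z)"
    unfolding bregman_div_client_fun using n_pos by (simp add: sum_distrib_left)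
  finally show ?thesis .
qed

lemma client_grad_diff_sq_le:
  assumes "m < M"
  shows "(norm (client_fun n g m x - client_fun n g m z))\<^sup>2 \<le> 2 * L * client_bregman m x z"
proof -
  have "client_fun n g m x - client_fun n g m z = (1 / real n) *\<^sub>R (\<Sum>k<n. g m k x - g m k z)"
    unfolding client_fun_def by (simp add: sum_subtractf scaleR_diff_right)
  then have "(norm (client_fun n g m x - client_fun n g m z))\<^sup>2
      \<le> (1 / real n) * (\<Sum>k<n. (norm (g m k x - g m k z))\<^sup>2)"
    by (metis power2_norm_mean_le)
  also have "\<dots> \<le> (1 / real n) * (2 * L * (real n * client_bregman m x z))"
    by (intro mult_left_mono sum_component_grad_diff_sq_le assms) simp
  also have "\<dots> = 2 * L * client_bregman m x z" using n_pos by simp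
  finally show ?thesis .
qed

context
  fixes m :: nat and \<pi> :: "nat \<Rightarrow> nat" and \<gamma> :: real and x xs :: 'a
  assumes m: "m < M" and \<pi>: "\<pi> permutes {..<n}" and \<gamma>: "\<gamma> > 0"
begin

abbreviation (input) y :: "nat \<Rightarrow> 'a" where "y i \<equiv> local_iter g \<gamma> m \<pi> x i"

lemma permuted_index_less: "i < n \<Longrightarrow> \<pi> i < n"
  using permutes_in_image[OF \<pi>] by auto

lemma sum_permuted: "(\<Sum>i<n. h (\<pi> i)) = (\<Sum>k<n. h k)"
  using sum.permute[OF \<pi>, of h] by (simp add: comp_def)

lemma pseudo_grad_eq_mean: "pseudo_grad m \<pi> \<gamma> x = (1 / real n) *\<^sub>R (\<Sum>i<n. g m (\<pi> i) (y i))"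
  unfolding pseudo_grad_def using \<gamma> n_pos by (subst local_iter_eq_sum) simp

lemma pseudo_grad_deviation_le:
  "(norm (pseudo_grad m \<pi> \<gamma> x - client_fun n g m x))\<^sup>2 \<le> L\<^sup>2 * local_drift m \<pi> \<gamma> x"
proof -
  have "pseudo_grad m \<pi> \<gamma> x - client_fun n g m x = (1 / real n) *\<^sub>R (\<Sum>i<n. g m (\<pi> i) (y i) - g m (\<pi> i) x)"
    unfolding pseudo_grad_eq_mean client_fun_def sum_permuted[of "\<lambda>k. g m k x", symmetric]
    by (simp add: sum_subtractf scaleR_diff_right)
  then have "(norm (pseudo_grad m \<pi> \<gamma> x - client_fun n g m x))\<^sup>2
      \<le> (1 / real n) * (\<Sum>i<n. (norm (g m (\<pi> i) (y i) - g m (\<pi> i) x))\<^sup>2)"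
    by (metis power2_norm_mean_le)
  also have "\<dots> \<le> (1 / real n) * (\<Sum>i<n. L\<^sup>2 * (norm (y i - x))\<^sup>2)"
    by (intro mult_left_mono sum_mono component_grad_diff_sq_le m permuted_index_less) auto
  also have "\<dots> = L\<^sup>2 * local_drift m \<pi> \<gamma> x" unfolding local_drift_def by (simp add: sum_distrib_left)
  finally show ?thesis .
qed

lemma pseudo_grad_inner_ge:
  "client_fun n f m x - client_fun n f m xs - L / 2 * local_drift m \<pi> \<gamma> x \<le> pseudo_grad m \<pi> \<gamma> x \<bullet> (x - xs)"
proof -
  have "(\<Sum>i<n. f m (\<pi> i) x - f m (\<pi> i) xs - L / 2 * (norm (x - y i))\<^sup>2) \<le> (\<Sum>i<n. g m (\<pi> i) (y i) \<bullet> (x - xs))"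
    by (intro sum_mono L_smooth_convex_three_point[OF grad cvx smooth]) (auto intro: m permuted_index_less)
  moreover have "(\<Sum>i<n. f m (\<pi> i) x - f m (\<pi> i) xs - L / 2 * (norm (x - y i))\<^sup>2)
      = (\<Sum>k<n. f m k x) - (\<Sum>k<n. f m k xs) - L / 2 * (\<Sum>i<n. (norm (y i - x))\<^sup>2)"
    by (simp add: sum_subtractf sum_distrib_left sum_permuted[of "\<lambda>k. f m k x"]
        sum_permuted[of "\<lambda>k. f m k xs"] norm_minus_commute)
  ultimately have "(1 / real n) * ((\<Sum>k<n. f m k x) - (\<Sum>k<n. f m k xs) - L / 2 * (\<Sum>i<n. (norm (y i - x))\<^sup>2))
      \<le> (1 / real n) * (\<Sum>i<n. g m (\<pi> i) (y i) \<bullet> (x - xs))"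
    by (intro mult_left_mono) auto
  then show ?thesis unfolding pseudo_grad_eq_mean client_fun_real_eq local_drift_def
    by (simp add: inner_sum_left right_diff_distrib diff_divide_distrib)
qed

lemma prefix_sum_grad_drift_sq_le:
  assumes "i \<le> n"
  shows "(norm (\<Sum>j<i. g m (\<pi> j) (y j) - g m (\<pi> j) x))\<^sup>2 \<le> (real n)\<^sup>2 * L\<^sup>2 * local_drift m \<pi> \<gamma> x"
proof -
  have "(norm (\<Sum>j<i. g m (\<pi> j) (y j) - g m (\<pi> j) x))\<^sup>2
      \<le> real i * (\<Sum>j<i. (norm (g m (\<pi> j) (y j) - g m (\<pi> j) x))\<^sup>2)"
    using power2_norm_sum_le[of _ "{..<i}"] by simp
  also have "\<dots> \<le> real n * (\<Sum>j<n. (norm (g m (\<pi> j) (y j) - g m (\<pi> j) x))\<^sup>2)"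
    using assms by (intro mult_mono sum_mono2) (auto intro: sum_nonneg)
  also have "\<dots> \<le> real n * (\<Sum>j<n. L\<^sup>2 * (norm (y j - x))\<^sup>2)"
    by (intro mult_left_mono sum_mono component_grad_diff_sq_le m permuted_index_less) auto
  also have "\<dots> = (real n)\<^sup>2 * L\<^sup>2 * local_drift m \<pi> \<gamma> x"
    unfolding local_drift_def using n_pos by (simp add: sum_distrib_left power2_eq_square mult.assoc)
  finally show ?thesis .
qed

lemma prefix_sum_grad_gap_sq_le:
  assumes "i \<le> n"
  shows "(norm (\<Sum>j<i. g m (\<pi> j) x - g m (\<pi> j) xs))\<^sup>2 \<le> 2 * L * (real n)\<^sup>2 * client_bregman m x xs"
proof -
  have "(norm (\<Sum>j<i. g m (\<pi> j) x - g m (\<pi> j) xs))\<^sup>2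
      \<le> real i * (\<Sum>j<i. (norm (g m (\<pi> j) x - g m (\<pi> j) xs))\<^sup>2)"
    using power2_norm_sum_le[of _ "{..<i}"] by simp
  also have "\<dots> \<le> real n * (\<Sum>j<n. (norm (g m (\<pi> j) x - g m (\<pi> j) xs))\<^sup>2)"
    using assms by (intro mult_mono sum_mono2) (auto intro: sum_nonneg)
  also have "\<dots> = real n * (\<Sum>k<n. (norm (g m k x - g m k xs))\<^sup>2)"
    using sum_permuted[of "\<lambda>k. (norm (g m k x - g m k xs))\<^sup>2"] by simp
  also have "\<dots> \<le> real n * (2 * L * (real n * client_bregman m x xs))"
    by (intro mult_left_mono sum_component_grad_diff_sq_le m) simp
  finally show ?thesis by (simp add: power2_eq_square mult_ac)
qed

text \<open>Split \<open>x - x\<^sup>i\<close> into \<open>\<gamma>\<close> times the prefix sum of the data gradients at \<open>xs\<close>, which only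
  depends on the permutation, and two prefix sums controlled by smoothness and by the Bregman gap.\<close>
lemma local_iter_dist_le:
  assumes i: "i < n"
  shows "(norm (y i - x))\<^sup>2 \<le> \<gamma>\<^sup>2 * (5/4 * (norm (\<Sum>j<i. g m (\<pi> j) xs))\<^sup>2
           + 10 * ((real n)\<^sup>2 * L\<^sup>2 * local_drift m \<pi> \<gamma> x) + 10 * (2 * L * (real n)\<^sup>2 * client_bregman m x xs))"
proof -
  define T1 where "T1 = (\<Sum>j<i. g m (\<pi> j) (y j) - g m (\<pi> j) x)"
  define T2 where "T2 = (\<Sum>j<i. g m (\<pi> j) x - g m (\<pi> j) xs)"
  define T3 where "T3 = (\<Sum>j<i. g m (\<pi> j) xs)"
  have "y i - x = - \<gamma> *\<^sub>R (T3 + (T1 + T2))"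
    by (subst local_iter_eq_sum) (simp add: T1_def T2_def T3_def sum_subtractf)
  then have "(norm (y i - x))\<^sup>2 = \<gamma>\<^sup>2 * (norm (T3 + (T1 + T2)))\<^sup>2"
    by (simp add: power_mult_distrib)
  also have "\<dots> \<le> \<gamma>\<^sup>2 * (5/4 * (norm T3)\<^sup>2 + 5 * (2 * (norm T1)\<^sup>2 + 2 * (norm T2)\<^sup>2))"
    using power2_norm_add_le_Young[of "1/4" T3 "T1 + T2"] power2_norm_add_le[of T1 T2]
    by (intro mult_left_mono) auto
  also have "\<dots> \<le> \<gamma>\<^sup>2 * (5/4 * (norm T3)\<^sup>2 + 10 * ((real n)\<^sup>2 * L\<^sup>2 * local_drift m \<pi> \<gamma> x)
      + 10 * (2 * L * (real n)\<^sup>2 * client_bregman m x xs))"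
    using prefix_sum_grad_drift_sq_le[of i] prefix_sum_grad_gap_sq_le[of i] i
    unfolding T1_def T2_def by (intro mult_left_mono) auto
  finally show ?thesis unfolding T3_def .
qed

text \<open>The drift appears on both sides; it is absorbed later, once \<open>\<gamma> n L\<close> is small.\<close>
lemma local_drift_le:
  "local_drift m \<pi> \<gamma> x \<le> 5/4 * \<gamma>\<^sup>2 * ((1 / real n) * (\<Sum>i<n. (norm (\<Sum>j<i. g m (\<pi> j) xs))\<^sup>2))
      + 10 * (\<gamma> * real n * L)\<^sup>2 * local_drift m \<pi> \<gamma> x + 20 * \<gamma>\<^sup>2 * L * (real n)\<^sup>2 * client_bregman m x xs"
proof -
  define V where "V = local_drift m \<pi> \<gamma> x"
  define D where "D = client_bregman m x xs"
  have "V \<le> (1 / real n) * (\<Sum>i<n. \<gamma>\<^sup>2 * (5/4 * (norm (\<Sum>j<i. g m (\<pi> j) xs))\<^sup>2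
           + 10 * ((real n)\<^sup>2 * L\<^sup>2 * V) + 10 * (2 * L * (real n)\<^sup>2 * D)))"
    unfolding V_def D_def local_drift_def[of m \<pi> \<gamma> x]
    by (intro mult_left_mono sum_mono local_iter_dist_le[unfolded local_drift_def]) auto
  also have "\<dots> = 5/4 * \<gamma>\<^sup>2 * ((1 / real n) * (\<Sum>i<n. (norm (\<Sum>j<i. g m (\<pi> j) xs))\<^sup>2))
      + 10 * (\<gamma> * real n * L)\<^sup>2 * V + 20 * \<gamma>\<^sup>2 * L * (real n)\<^sup>2 * D"
  proof -
    have mean: "(1 / real n) * (\<Sum>i<n. c * (5/4 * a i + K1 + K2))
        = 5/4 * c * ((1 / real n) * (\<Sum>i<n. a i)) + c * K1 + c * K2" for c K1 K2 :: real and a :: "nat \<Rightarrow> real"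
    proof -
      have "(\<Sum>i<n. c * (5/4 * a i + K1 + K2)) = 5/4 * c * (\<Sum>i<n. a i) + real n * (c * K1) + real n * (c * K2)"
        by (simp add: sum.distrib distrib_left sum_distrib_left mult.assoc mult.left_commute)
      then show ?thesis using n_pos by (simp add: field_simps)
    qed
    show ?thesis unfolding mean by (simp add: power_mult_distrib algebra_simps)
  qed
  finally show ?thesis unfolding V_def D_def .
qed

end

definition expected_drift :: "nat \<Rightarrow> real \<Rightarrow> 'a \<Rightarrow> real" where
  "expected_drift m \<gamma> x = measure_pmf.expectation (pmf_of_set (perms n)) (\<lambda>\<pi>. local_drift m \<pi> \<gamma> x)"

definition expected_pseudo_grad :: "nat \<Rightarrow> real \<Rightarrow> 'a \<Rightarrow> 'a" where
  "expected_pseudo_grad m \<gamma> x = measure_pmf.expectation (pmf_of_set (perms n)) (\<lambda>\<pi>. pseudo_grad m \<pi> \<gamma> x)"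

lemma expected_drift_nonneg: "0 \<le> expected_drift m \<gamma> x"
  unfolding expected_drift_def by (intro integral_nonneg_AE AE_I2 local_drift_nonneg)

lemma permutes_of_set_pmf_perms: "\<pi> \<in> set_pmf (pmf_of_set (perms n)) \<Longrightarrow> \<pi> permutes {..<n}"
  unfolding set_pmf_perms by (simp add: perms_def)

context
  fixes m :: nat and \<gamma> :: real and x xs :: 'a
  assumes m: "m < M" and \<gamma>: "\<gamma> > 0"
begin

lemma expected_drift_le:
  "(1 - 10 * (\<gamma> * real n * L)\<^sup>2) * expected_drift m \<gamma> x
     \<le> 5/4 * \<gamma>\<^sup>2 * ((1/2) * (\<Sum>k<n. (norm (g m k xs))\<^sup>2) + (norm (\<Sum>k<n. g m k xs))\<^sup>2)
       + 20 * \<gamma>\<^sup>2 * L * (real n)\<^sup>2 * client_bregman m x xs"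
proof -
  define P where "P = pmf_of_set (perms n)"
  define a where "a = 10 * (\<gamma> * real n * L)\<^sup>2"
  define B where "B = (1/2) * (\<Sum>k<n. (norm (g m k xs))\<^sup>2) + (norm (\<Sum>k<n. g m k xs))\<^sup>2"
  define Z where "Z \<pi> = (1 / real n) * (\<Sum>i<n. (norm (\<Sum>j<i. g m (\<pi> j) xs))\<^sup>2)" for \<pi>
  have pointwise: "(1 - a) * local_drift m \<pi> \<gamma> x \<le> 5/4 * \<gamma>\<^sup>2 * Z \<pi> + 20 * \<gamma>\<^sup>2 * L * (real n)\<^sup>2 * client_bregman m x xs"
    if "\<pi> \<in> set_pmf P" for \<pi>
    using local_drift_le[OF m permutes_of_set_pmf_perms \<gamma>, of \<pi> x xs] that
    unfolding a_def Z_def P_def by (simp add: algebra_simps)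
  have EZ: "measure_pmf.expectation P Z \<le> B"
  proof -
    have "measure_pmf.expectation P Z
        = (1 / real n) * (\<Sum>i<n. measure_pmf.expectation P (\<lambda>\<pi>. (norm (\<Sum>j<i. g m (\<pi> j) xs))\<^sup>2))"
      unfolding Z_def P_def by (simp add: expectation_sum_finite finite_perms)
    also have "\<dots> \<le> (1 / real n) * (\<Sum>i<n. B)"
      unfolding B_def P_def by (intro mult_left_mono sum_mono expectation_perms_prefix_sum_sq_le) auto
    also have "\<dots> = B" using n_pos by simp
    finally show ?thesis .
  qed
  have "(1 - a) * expected_drift m \<gamma> x = measure_pmf.expectation P (\<lambda>\<pi>. (1 - a) * local_drift m \<pi> \<gamma> x)"
    unfolding expected_drift_def P_def by simp
  also have "\<dots> \<le> measure_pmf.expectation P (\<lambda>\<pi>. 5/4 * \<gamma>\<^sup>2 * Z \<pi> + 20 * \<gamma>\<^sup>2 * L * (real n)\<^sup>2 * client_bregman m x xs)"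
    by (intro expectation_mono_finite pointwise) (auto simp: P_def finite_perms)
  also have "\<dots> = 5/4 * \<gamma>\<^sup>2 * measure_pmf.expectation P Z + 20 * \<gamma>\<^sup>2 * L * (real n)\<^sup>2 * client_bregman m x xs"
    by (simp add: P_def integrable_measure_pmf_finite finite_perms)
  also have "\<dots> \<le> 5/4 * \<gamma>\<^sup>2 * B + 20 * \<gamma>\<^sup>2 * L * (real n)\<^sup>2 * client_bregman m x xs"
    using mult_left_mono[OF EZ, of "5/4 * \<gamma>\<^sup>2"] by simp
  finally show ?thesis unfolding a_def B_def .
qed

lemma expected_pseudo_grad_inner_ge:
  "client_fun n f m x - client_fun n f m xs - L / 2 * expected_drift m \<gamma> x \<le> expected_pseudo_grad m \<gamma> x \<bullet> (x - xs)"
proof -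
  have "measure_pmf.expectation (pmf_of_set (perms n)) (\<lambda>\<pi>. client_fun n f m x - client_fun n f m xs - L / 2 * local_drift m \<pi> \<gamma> x)
      \<le> measure_pmf.expectation (pmf_of_set (perms n)) (\<lambda>\<pi>. pseudo_grad m \<pi> \<gamma> x \<bullet> (x - xs))"
    by (rule expectation_mono_finite[OF finite_set_pmf_perms])
      (rule pseudo_grad_inner_ge[OF m permutes_of_set_pmf_perms \<gamma>])
  then show ?thesis unfolding expected_drift_def expected_pseudo_grad_def
    by (simp add: integrable_measure_pmf_finite finite_perms)
qed

lemma expected_pseudo_grad_deviation_le:
  "(norm (expected_pseudo_grad m \<gamma> x - client_fun n g m x))\<^sup>2 \<le> L\<^sup>2 * expected_drift m \<gamma> x"
proof -
  have "expected_pseudo_grad m \<gamma> x - client_fun n g m x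
      = measure_pmf.expectation (pmf_of_set (perms n)) (\<lambda>\<pi>. pseudo_grad m \<pi> \<gamma> x - client_fun n g m x)"
    unfolding expected_pseudo_grad_def by (simp add: integrable_measure_pmf_finite finite_perms)
  then have "(norm (expected_pseudo_grad m \<gamma> x - client_fun n g m x))\<^sup>2
      \<le> measure_pmf.expectation (pmf_of_set (perms n)) (\<lambda>\<pi>. (norm (pseudo_grad m \<pi> \<gamma> x - client_fun n g m x))\<^sup>2)"
    by (metis power2_norm_expectation_le[OF finite_set_pmf_perms])
  also have "\<dots> \<le> measure_pmf.expectation (pmf_of_set (perms n)) (\<lambda>\<pi>. L\<^sup>2 * local_drift m \<pi> \<gamma> x)"
    by (rule expectation_mono_finite[OF finite_set_pmf_perms])
      (rule pseudo_grad_deviation_le[OF m permutes_of_set_pmf_perms \<gamma>])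
  also have "\<dots> = L\<^sup>2 * expected_drift m \<gamma> x" unfolding expected_drift_def by simp
  finally show ?thesis .
qed

lemma pseudo_grad_variance_le:
  "measure_pmf.expectation (pmf_of_set (perms n)) (\<lambda>\<pi>. (norm (pseudo_grad m \<pi> \<gamma> x))\<^sup>2)
     - (norm (expected_pseudo_grad m \<gamma> x))\<^sup>2 \<le> L\<^sup>2 * expected_drift m \<gamma> x"
proof -
  have "measure_pmf.expectation (pmf_of_set (perms n)) (\<lambda>\<pi>. (norm (pseudo_grad m \<pi> \<gamma> x))\<^sup>2)
      - (norm (expected_pseudo_grad m \<gamma> x))\<^sup>2
      \<le> measure_pmf.expectation (pmf_of_set (perms n)) (\<lambda>\<pi>. (norm (pseudo_grad m \<pi> \<gamma> x - client_fun n g m x))\<^sup>2)"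
    unfolding expected_pseudo_grad_def by (rule expectation_power2_norm_sub_le[OF finite_set_pmf_perms])
  also have "\<dots> \<le> measure_pmf.expectation (pmf_of_set (perms n)) (\<lambda>\<pi>. L\<^sup>2 * local_drift m \<pi> \<gamma> x)"
    by (rule expectation_mono_finite[OF finite_set_pmf_perms])
      (rule pseudo_grad_deviation_le[OF m permutes_of_set_pmf_perms \<gamma>])
  also have "\<dots> = L\<^sup>2 * expected_drift m \<gamma> x" unfolding expected_drift_def by simp
  finally show ?thesis .
qed

lemma expected_pseudo_grad_sq_le:
  "(norm (expected_pseudo_grad m \<gamma> x))\<^sup>2
     \<le> 4 * L\<^sup>2 * expected_drift m \<gamma> x + 8 * L * client_bregman m x xs + 2 * (norm (client_fun n g m xs))\<^sup>2"
proof -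
  have "(norm (pseudo_grad m \<pi> \<gamma> x))\<^sup>2
      \<le> 4 * L\<^sup>2 * local_drift m \<pi> \<gamma> x + 8 * L * client_bregman m x xs + 2 * (norm (client_fun n g m xs))\<^sup>2"
    if "\<pi> \<in> set_pmf (pmf_of_set (perms n))" for \<pi>
  proof -
    have "(norm (pseudo_grad m \<pi> \<gamma> x))\<^sup>2
        \<le> 2 * (norm (pseudo_grad m \<pi> \<gamma> x - client_fun n g m xs))\<^sup>2 + 2 * (norm (client_fun n g m xs))\<^sup>2"
      using power2_norm_add_le[of "pseudo_grad m \<pi> \<gamma> x - client_fun n g m xs" "client_fun n g m xs"] by simp
    moreover have "(norm (pseudo_grad m \<pi> \<gamma> x - client_fun n g m xs))\<^sup>2
        \<le> 2 * (norm (pseudo_grad m \<pi> \<gamma> x - client_fun n g m x))\<^sup>2 + 2 * (norm (client_fun n g m x - client_fun n g m xs))\<^sup>2"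
      using power2_norm_add_le[of "pseudo_grad m \<pi> \<gamma> x - client_fun n g m x" "client_fun n g m x - client_fun n g m xs"]
      by simp
    moreover have "(norm (pseudo_grad m \<pi> \<gamma> x - client_fun n g m x))\<^sup>2 \<le> L\<^sup>2 * local_drift m \<pi> \<gamma> x"
      by (rule pseudo_grad_deviation_le[OF m permutes_of_set_pmf_perms[OF that] \<gamma>])
    moreover have "(norm (client_fun n g m x - client_fun n g m xs))\<^sup>2 \<le> 2 * L * client_bregman m x xs"
      by (rule client_grad_diff_sq_le[OF m])
    ultimately show ?thesis by linarith
  qed
  then have "measure_pmf.expectation (pmf_of_set (perms n)) (\<lambda>\<pi>. (norm (pseudo_grad m \<pi> \<gamma> x))\<^sup>2)
      \<le> measure_pmf.expectation (pmf_of_set (perms n))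
          (\<lambda>\<pi>. 4 * L\<^sup>2 * local_drift m \<pi> \<gamma> x + 8 * L * client_bregman m x xs + 2 * (norm (client_fun n g m xs))\<^sup>2)"
    by (rule expectation_mono_finite[OF finite_set_pmf_perms])
  also have "\<dots> = 4 * L\<^sup>2 * expected_drift m \<gamma> x + 8 * L * client_bregman m x xs + 2 * (norm (client_fun n g m xs))\<^sup>2"
    unfolding expected_drift_def by (simp add: integrable_measure_pmf_finite finite_perms)
  finally show ?thesis
    unfolding expected_pseudo_grad_def by (rule order_trans[OF power2_norm_expectation_le[OF finite_set_pmf_perms]])
qed

end

section \<open>One round of Nastya\<close>

lemma nastya_step_eq:
  "nastya_step M n C g \<gamma> \<eta> x = pmf_of_set (cohorts M C) \<bind> (\<lambda>S.
      map_pmf (\<lambda>\<pi>. x - \<eta> *\<^sub>R ((1 / real C) *\<^sub>R (\<Sum>m\<in>S. pseudo_grad m (\<pi> m) \<gamma> x)))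
        (Pi_pmf S id (\<lambda>_. pmf_of_set (perms n))))"
  unfolding nastya_step_def Let_def pseudo_grad_def map_pmf_def by simp

lemma finite_set_pmf_nastya_step: "C \<le> M \<Longrightarrow> finite (set_pmf (nastya_step M n C g \<gamma> \<eta> x))"
  unfolding nastya_step_eq
  by (auto simp: set_pmf_cohorts finite_cohorts finite_perms
      intro!: finite_set_Pi_pmf_const cohorts_finite_member)

definition mean_pseudo_grad :: "real \<Rightarrow> 'a \<Rightarrow> 'a" where
  "mean_pseudo_grad \<gamma> x = (1 / real M) *\<^sub>R (\<Sum>m<M. expected_pseudo_grad m \<gamma> x)"

definition mean_drift :: "real \<Rightarrow> 'a \<Rightarrow> real" where
  "mean_drift \<gamma> x = (1 / real M) * (\<Sum>m<M. expected_drift m \<gamma> x)"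

definition pseudo_grad_variance :: "nat \<Rightarrow> real \<Rightarrow> 'a \<Rightarrow> real" where
  "pseudo_grad_variance m \<gamma> x =
     measure_pmf.expectation (pmf_of_set (perms n)) (\<lambda>\<pi>. (norm (pseudo_grad m \<pi> \<gamma> x))\<^sup>2)
     - (norm (expected_pseudo_grad m \<gamma> x))\<^sup>2"

lemma mean_drift_nonneg: "0 \<le> mean_drift \<gamma> x"
  unfolding mean_drift_def by (intro mult_nonneg_nonneg sum_nonneg expected_drift_nonneg) auto

lemma expectation_step_given_cohort:
  assumes S: "finite S"
  shows "measure_pmf.expectation (Pi_pmf S id (\<lambda>_. pmf_of_set (perms n)))
           (\<lambda>\<pi>. (norm (x - \<eta> *\<^sub>R ((1 / real C) *\<^sub>R (\<Sum>m\<in>S. pseudo_grad m (\<pi> m) \<gamma> x)) - xs))\<^sup>2)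
       = (norm (x - xs))\<^sup>2 - 2 * \<eta> * ((x - xs) \<bullet> ((1 / real C) *\<^sub>R (\<Sum>m\<in>S. expected_pseudo_grad m \<gamma> x)))
         + \<eta>\<^sup>2 * (norm ((1 / real C) *\<^sub>R (\<Sum>m\<in>S. expected_pseudo_grad m \<gamma> x)))\<^sup>2
         + \<eta>\<^sup>2 / (real C)\<^sup>2 * (\<Sum>m\<in>S. pseudo_grad_variance m \<gamma> x)"
proof -
  define P where "P = Pi_pmf S id (\<lambda>_. pmf_of_set (perms n))"
  define v where "v \<pi> = (\<Sum>m\<in>S. pseudo_grad m (\<pi> m) \<gamma> x)" for \<pi>
  have P: "finite (set_pmf P)" unfolding P_def by (rule finite_set_Pi_pmf_const[OF S finite_set_pmf_perms])
  have "(norm (x - \<eta> *\<^sub>R ((1 / real C) *\<^sub>R v \<pi>) - xs))\<^sup>2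
      = (norm (x - xs))\<^sup>2 - 2 * (\<eta> / real C) * ((x - xs) \<bullet> v \<pi>) + (\<eta> / real C)\<^sup>2 * (norm (v \<pi>))\<^sup>2" for \<pi>
  proof -
    have "x - \<eta> *\<^sub>R ((1 / real C) *\<^sub>R v \<pi>) - xs = (x - xs) + (- (\<eta> / real C)) *\<^sub>R v \<pi>"
      by (simp add: algebra_simps)
    then show ?thesis by (simp only: power2_norm_add) (simp add: power_mult_distrib power_divide)
  qed
  then have "measure_pmf.expectation P (\<lambda>\<pi>. (norm (x - \<eta> *\<^sub>R ((1 / real C) *\<^sub>R v \<pi>) - xs))\<^sup>2)
      = (norm (x - xs))\<^sup>2 - 2 * (\<eta> / real C) * ((x - xs) \<bullet> measure_pmf.expectation P v)
        + (\<eta> / real C)\<^sup>2 * measure_pmf.expectation P (\<lambda>\<pi>. (norm (v \<pi>))\<^sup>2)"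
    using P by (simp add: integrable_measure_pmf_finite)
  also have "measure_pmf.expectation P v = (\<Sum>m\<in>S. expected_pseudo_grad m \<gamma> x)"
    unfolding P_def v_def expected_pseudo_grad_def
    by (rule expectation_Pi_pmf_sum[OF S finite_set_pmf_perms])
  also have "measure_pmf.expectation P (\<lambda>\<pi>. (norm (v \<pi>))\<^sup>2)
      = (norm (\<Sum>m\<in>S. expected_pseudo_grad m \<gamma> x))\<^sup>2 + (\<Sum>m\<in>S. pseudo_grad_variance m \<gamma> x)"
    unfolding P_def v_def expected_pseudo_grad_def pseudo_grad_variance_def
    by (rule expectation_Pi_pmf_sum_sq[OF S finite_set_pmf_perms])
  finally show ?thesis unfolding P_def v_def
    by (simp add: power_mult_distrib power_divide algebra_simps)
qed

lemma expectation_nastya_step_eq: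
  assumes C: "1 \<le> C" "C \<le> M"
  shows "measure_pmf.expectation (nastya_step M n C g \<gamma> \<eta> x) (\<lambda>z. (norm (z - xs))\<^sup>2)
     = (norm (x - xs))\<^sup>2 - 2 * \<eta> * ((x - xs) \<bullet> mean_pseudo_grad \<gamma> x)
       + \<eta>\<^sup>2 * measure_pmf.expectation (pmf_of_set (cohorts M C))
                 (\<lambda>S. (norm ((1 / real C) *\<^sub>R (\<Sum>m\<in>S. expected_pseudo_grad m \<gamma> x)))\<^sup>2)
       + \<eta>\<^sup>2 / (real C * real M) * (\<Sum>m<M. pseudo_grad_variance m \<gamma> x)"
proof -
  define Qc where "Qc = pmf_of_set (cohorts M C)"
  define W where "W m = expected_pseudo_grad m \<gamma> x" for m
  have Qc: "finite (set_pmf Qc)" unfolding Qc_def by (rule finite_set_pmf_cohorts[OF C(2)])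
  have S: "finite S" if "S \<in> set_pmf Qc" for S
    using that unfolding Qc_def set_pmf_cohorts[OF C(2)] by (rule cohorts_finite_member)
  have given_S: "measure_pmf.expectation (map_pmf (\<lambda>\<pi>. x - \<eta> *\<^sub>R ((1 / real C) *\<^sub>R (\<Sum>m\<in>S. pseudo_grad m (\<pi> m) \<gamma> x)))
        (Pi_pmf S id (\<lambda>_. pmf_of_set (perms n)))) (\<lambda>z. (norm (z - xs))\<^sup>2)
      = (norm (x - xs))\<^sup>2 - 2 * \<eta> * ((x - xs) \<bullet> ((1 / real C) *\<^sub>R (\<Sum>m\<in>S. W m)))
         + \<eta>\<^sup>2 * (norm ((1 / real C) *\<^sub>R (\<Sum>m\<in>S. W m)))\<^sup>2
         + \<eta>\<^sup>2 / (real C)\<^sup>2 * (\<Sum>m\<in>S. pseudo_grad_variance m \<gamma> x)"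
    if "S \<in> set_pmf Qc" for S
    unfolding integral_map_pmf W_def by (rule expectation_step_given_cohort[OF S[OF that]])
  have "measure_pmf.expectation (nastya_step M n C g \<gamma> \<eta> x) (\<lambda>z. (norm (z - xs))\<^sup>2)
      = measure_pmf.expectation Qc (\<lambda>S. (norm (x - xs))\<^sup>2 - 2 * \<eta> * ((x - xs) \<bullet> ((1 / real C) *\<^sub>R (\<Sum>m\<in>S. W m)))
         + \<eta>\<^sup>2 * (norm ((1 / real C) *\<^sub>R (\<Sum>m\<in>S. W m)))\<^sup>2
         + \<eta>\<^sup>2 / (real C)\<^sup>2 * (\<Sum>m\<in>S. pseudo_grad_variance m \<gamma> x))"
  proof -
    have "measure_pmf.expectation (nastya_step M n C g \<gamma> \<eta> x) (\<lambda>z. (norm (z - xs))\<^sup>2)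
      = measure_pmf.expectation Qc (\<lambda>S. measure_pmf.expectation
          (map_pmf (\<lambda>\<pi>. x - \<eta> *\<^sub>R ((1 / real C) *\<^sub>R (\<Sum>m\<in>S. pseudo_grad m (\<pi> m) \<gamma> x)))
            (Pi_pmf S id (\<lambda>_. pmf_of_set (perms n)))) (\<lambda>z. (norm (z - xs))\<^sup>2))"
      unfolding nastya_step_eq Qc_def[symmetric]
      by (rule expectation_bind_finite[OF Qc]) (simp add: S finite_set_Pi_pmf_const finite_perms)
    then show ?thesis
      by (simp only:) (rule integral_cong_AE, simp, simp, unfold AE_measure_pmf_iff, use given_S in blast)
  qed
  also have "\<dots> = (norm (x - xs))\<^sup>2 - 2 * \<eta> * ((x - xs) \<bullet> ((1 / real C) *\<^sub>R measure_pmf.expectation Qc (\<lambda>S. \<Sum>m\<in>S. W m)))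
      + \<eta>\<^sup>2 * measure_pmf.expectation Qc (\<lambda>S. (norm ((1 / real C) *\<^sub>R (\<Sum>m\<in>S. W m)))\<^sup>2)
      + \<eta>\<^sup>2 / (real C)\<^sup>2 * measure_pmf.expectation Qc (\<lambda>S. \<Sum>m\<in>S. pseudo_grad_variance m \<gamma> x)"
    using Qc by (simp add: integrable_measure_pmf_finite)
  also have "(1 / real C) *\<^sub>R measure_pmf.expectation Qc (\<lambda>S. \<Sum>m\<in>S. W m) = mean_pseudo_grad \<gamma> x"
    unfolding Qc_def expectation_cohorts_sum[OF C(2)] mean_pseudo_grad_def W_def using C by simp
  also have "\<eta>\<^sup>2 / (real C)\<^sup>2 * measure_pmf.expectation Qc (\<lambda>S. \<Sum>m\<in>S. pseudo_grad_variance m \<gamma> x)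
      = \<eta>\<^sup>2 / (real C * real M) * (\<Sum>m<M. pseudo_grad_variance m \<gamma> x)"
    unfolding Qc_def expectation_cohorts_sum[OF C(2)] using C by (simp add: power2_eq_square)
  finally show ?thesis unfolding Qc_def W_def .
qed

lemma expectation_nastya_step_le:
  assumes \<gamma>: "\<gamma> > 0" and C: "1 \<le> C" "C \<le> M"
  shows "measure_pmf.expectation (nastya_step M n C g \<gamma> \<eta> x) (\<lambda>z. (norm (z - xs))\<^sup>2)
     \<le> (norm (x - xs))\<^sup>2 - 2 * \<eta> * ((x - xs) \<bullet> mean_pseudo_grad \<gamma> x)
       + \<eta>\<^sup>2 * ((norm (mean_pseudo_grad \<gamma> x))\<^sup>2
                + cohort_factor M C * ((1 / real M) * (\<Sum>m<M. (norm (expected_pseudo_grad m \<gamma> x))\<^sup>2)))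
       + \<eta>\<^sup>2 * (L\<^sup>2 * mean_drift \<gamma> x)"
proof -
  have "measure_pmf.expectation (pmf_of_set (cohorts M C))
          (\<lambda>S. (norm ((1 / real C) *\<^sub>R (\<Sum>m\<in>S. expected_pseudo_grad m \<gamma> x)))\<^sup>2)
      \<le> (norm (mean_pseudo_grad \<gamma> x))\<^sup>2
        + cohort_factor M C * ((1 / real M) * (\<Sum>m<M. (norm (expected_pseudo_grad m \<gamma> x))\<^sup>2))"
    unfolding mean_pseudo_grad_def by (rule expectation_cohorts_mean_sq_le[OF C])
  moreover have "\<eta>\<^sup>2 / (real C * real M) * (\<Sum>m<M. pseudo_grad_variance m \<gamma> x) \<le> \<eta>\<^sup>2 * (L\<^sup>2 * mean_drift \<gamma> x)"
  proof -
    have "(\<Sum>m<M. pseudo_grad_variance m \<gamma> x) \<le> (\<Sum>m<M. L\<^sup>2 * expected_drift m \<gamma> x)"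
      unfolding pseudo_grad_variance_def by (intro sum_mono pseudo_grad_variance_le \<gamma>) simp
    then have "1 / (real C * real M) * (\<Sum>m<M. pseudo_grad_variance m \<gamma> x)
        \<le> 1 / (real C * real M) * (\<Sum>m<M. L\<^sup>2 * expected_drift m \<gamma> x)"
      by (intro mult_left_mono) auto
    also have "\<dots> \<le> 1 / real M * (\<Sum>m<M. L\<^sup>2 * expected_drift m \<gamma> x)"
      using C M_pos by (intro mult_right_mono divide_left_mono sum_nonneg mult_nonneg_nonneg
          expected_drift_nonneg) auto
    also have "\<dots> = L\<^sup>2 * mean_drift \<gamma> x" unfolding mean_drift_def by (simp add: sum_distrib_left mult_ac)
    finally show ?thesis using mult_left_mono[of _ _ "\<eta>\<^sup>2"] by fastforce
  qed
  ultimately show ?thesis unfolding expectation_nastya_step_eq[OF C]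
    using mult_left_mono[of _ _ "\<eta>\<^sup>2"] by fastforce
qed

end

lemma drift_absorption_arith:
  fixes \<eta> L \<gamma> N D V sb ss :: real
  assumes L: "L > 0" and \<gamma>: "\<gamma> > 0" and N: "N \<ge> 1" and \<gamma>N: "\<gamma> * N \<le> \<eta>" and \<eta>L: "\<eta> \<le> 1 / (16 * L)"
    and D: "0 \<le> D" and V: "0 \<le> V" and sb: "0 \<le> sb" and ss: "0 \<le> ss"
    and drift: "(1 - 10 * (\<gamma> * N * L)\<^sup>2) * V
                  \<le> 5/4 * \<gamma>\<^sup>2 * ((1/2) * (N * sb) + N\<^sup>2 * ss) + 20 * \<gamma>\<^sup>2 * L * N\<^sup>2 * D"
  shows "\<eta> * L * V + \<eta>\<^sup>2 * (7 * L\<^sup>2 * V)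
     \<le> 15/16 * \<eta> * \<gamma>\<^sup>2 * N * L * sb + 15/8 * \<eta> * \<gamma>\<^sup>2 * N\<^sup>2 * L * ss + 30/256 * \<eta> * D"
proof -
  define \<rho> where "\<rho> = \<eta> * L"
  define a where "a = \<gamma> * N * L"
  define K where "K = 5/4 * \<gamma>\<^sup>2 * ((1/2) * (N * sb) + N\<^sup>2 * ss) + 20 * \<gamma>\<^sup>2 * L * N\<^sup>2 * D"
  have "0 < \<gamma> * N" using \<gamma> N by simp
  then have \<eta>: "\<eta> > 0" using \<gamma>N by linarith
  have \<rho>1: "\<rho> \<le> 1/16" unfolding \<rho>_def using \<eta>L L by (simp add: field_simps)
  have \<rho>0: "0 < \<rho>" unfolding \<rho>_def using \<eta> L by simp
  have a0: "0 < a" unfolding a_def using \<gamma> N L by simp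
  have "a \<le> \<rho>" unfolding a_def \<rho>_def using \<gamma>N L by (intro mult_right_mono) auto
  then have "a\<^sup>2 \<le> (1/16)\<^sup>2" using a0 \<rho>1 by (intro power_mono) auto
  then have a2: "a\<^sup>2 \<le> 1/256" by (simp add: power2_eq_square)
  have K0: "0 \<le> K" unfolding K_def using L D sb ss N by (intro add_nonneg_nonneg mult_nonneg_nonneg) auto
  have "246/256 * V \<le> (1 - 10 * a\<^sup>2) * V" using a2 V by (intro mult_right_mono) auto
  also have "\<dots> \<le> K" using drift unfolding a_def K_def .
  finally have VK: "V \<le> 256/246 * K" by simp
  have "\<eta> * L * V + \<eta>\<^sup>2 * (7 * L\<^sup>2 * V) = \<rho> * (1 + 7 * \<rho>) * V"
    unfolding \<rho>_def by (simp add: power2_eq_square algebra_simps)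
  also have "\<dots> \<le> \<rho> * (23/16) * V" using \<rho>0 \<rho>1 V by (intro mult_right_mono mult_left_mono) auto
  also have "\<dots> \<le> \<rho> * (23/16) * (256/246 * K)" using \<rho>0 VK by (intro mult_left_mono) auto
  also have "\<dots> \<le> \<rho> * (3/2) * K" using \<rho>0 K0 by (simp add: mult_right_mono)
  also have "\<dots> = 15/16 * \<eta> * \<gamma>\<^sup>2 * N * L * sb + 15/8 * \<eta> * \<gamma>\<^sup>2 * N\<^sup>2 * L * ss + 30 * \<eta> * a\<^sup>2 * D"
    unfolding \<rho>_def K_def a_def by (simp add: power2_eq_square algebra_simps)
  also have "30 * \<eta> * a\<^sup>2 * D \<le> 30 * \<eta> * (1/256) * D"
    using a2 \<eta> D by (intro mult_right_mono mult_left_mono) auto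
  finally show ?thesis by simp
qed

text \<open>With \<open>\<eta> L \<le> 1/16\<close> the drift and the Bregman terms of the second order are absorbed by the
  first-order decrease \<open>-2 \<eta> D\<close>, and \<open>D \<ge> \<mu>/2 R\<close> turns what is left into a contraction.\<close>
lemma one_round_arith:
  fixes \<eta> L \<gamma> N \<mu> R D V sb ss c E :: real
  assumes L: "L > 0" and \<gamma>: "\<gamma> > 0" and N: "N \<ge> 1" and \<gamma>N: "\<gamma> * N \<le> \<eta>" and \<eta>L: "\<eta> \<le> 1 / (16 * L)"
    and c: "0 \<le> c" and DR: "\<mu> / 2 * R \<le> D" and D: "0 \<le> D"
    and V: "0 \<le> V" and sb: "0 \<le> sb" and ss: "0 \<le> ss"
    and drift: "(1 - 10 * (\<gamma> * N * L)\<^sup>2) * V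
                  \<le> 5/4 * \<gamma>\<^sup>2 * ((1/2) * (N * sb) + N\<^sup>2 * ss) + 20 * \<gamma>\<^sup>2 * L * N\<^sup>2 * D"
    and E: "E \<le> R - 2 * \<eta> * D + \<eta> * L * V + \<eta>\<^sup>2 * (7 * L\<^sup>2 * V + 12 * L * D) + 2 * \<eta>\<^sup>2 * c * ss"
  shows "E \<le> (1 - \<eta> * \<mu> / 2) * R + 5/2 * \<eta> * \<gamma>\<^sup>2 * N * L * (sb + N * ss) + 4 * \<eta>\<^sup>2 * c * ss"
proof -
  have "0 < \<gamma> * N" using \<gamma> N by simp
  then have \<eta>: "\<eta> > 0" using \<gamma>N by linarith
  define P where "P = \<eta> * D"
  define A1 where "A1 = \<eta> * \<gamma>\<^sup>2 * N * L * sb"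
  define A2 where "A2 = \<eta> * \<gamma>\<^sup>2 * N\<^sup>2 * L * ss"
  define Z where "Z = \<eta>\<^sup>2 * c * ss"
  have "\<eta> * L * V + \<eta>\<^sup>2 * (7 * L\<^sup>2 * V) \<le> 15/16 * A1 + 15/8 * A2 + 30/256 * P"
    using drift_absorption_arith[OF L \<gamma> N \<gamma>N \<eta>L D V sb ss drift] unfolding A1_def A2_def P_def
    by (simp add: algebra_simps)
  moreover have "\<eta>\<^sup>2 * (12 * L * D) \<le> 3/4 * P"
  proof -
    have "\<eta> * L \<le> 1/16" using \<eta>L L by (simp add: field_simps)
    then have "12 * (\<eta> * L) \<le> 12 * (1/16)" by linarith
    then have "12 * (\<eta> * L) * (\<eta> * D) \<le> 12 * (1/16) * (\<eta> * D)"
      by (rule mult_right_mono) (use \<eta> D in simp)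
    then show ?thesis unfolding P_def by (simp add: power2_eq_square algebra_simps)
  qed
  moreover have "\<eta> * (\<mu> / 2 * R) \<le> P" unfolding P_def using DR \<eta> by (intro mult_left_mono) auto
  moreover have "0 \<le> A1" "0 \<le> A2" "0 \<le> Z" "0 \<le> P"
    unfolding A1_def A2_def Z_def P_def using \<eta> \<gamma> N L sb ss c D by simp_all
  moreover have "E \<le> R - 2 * P + (\<eta> * L * V + \<eta>\<^sup>2 * (7 * L\<^sup>2 * V)) + \<eta>\<^sup>2 * (12 * L * D) + 2 * Z"
    using E unfolding P_def Z_def by (simp add: algebra_simps)
  moreover have "(1 - \<eta> * \<mu> / 2) * R + 5/2 * \<eta> * \<gamma>\<^sup>2 * N * L * (sb + N * ss) + 4 * \<eta>\<^sup>2 * c * ss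
      = R - \<eta> * (\<mu> / 2 * R) + 5/2 * A1 + 5/2 * A2 + 4 * Z"
    unfolding A1_def A2_def Z_def by (simp add: power2_eq_square algebra_simps)
  ultimately show ?thesis by linarith
qed

lemma linear_recursion_le:
  fixes e :: "nat \<Rightarrow> real"
  assumes step: "\<And>t. e (Suc t) \<le> q * e t + A" and q: "0 \<le> q" "q < 1" and A: "0 \<le> A"
  shows "e T \<le> q ^ T * e 0 + A / (1 - q)"
proof -
  have bound: "e t \<le> q ^ t * e 0 + A * (\<Sum>j<t. q ^ j)" for t
  proof (induction t)
    case (Suc t)
    have "e (Suc t) \<le> q * (q ^ t * e 0 + A * (\<Sum>j<t. q ^ j)) + A"
      using step[of t] mult_left_mono[OF Suc q(1)] by linarith
    also have "\<dots> = q ^ Suc t * e 0 + A * (1 + q * (\<Sum>j<t. q ^ j))"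
      by (simp add: algebra_simps)
    also have "1 + q * (\<Sum>j<t. q ^ j) = (\<Sum>j<Suc t. q ^ j)"
      using sum.lessThan_Suc_shift[of "\<lambda>j. q ^ j" t] by (simp add: sum_distrib_left)
    finally show ?case .
  qed simp
  have "(\<Sum>j<T. q ^ j) \<le> 1 / (1 - q)"
    using q by (simp add: sum_gp_strict divide_right_mono)
  then have "A * (\<Sum>j<T. q ^ j) \<le> A / (1 - q)" using mult_left_mono[OF _ A] by fastforce
  then show ?thesis using bound[of T] by linarith
qed

lemma (in smooth_convex_clients) global_fun_has_derivative:
  "(global_fun M n f has_derivative (\<lambda>h. global_fun M n g x \<bullet> h)) (at x)"
proof -
  have "((\<lambda>x. (1 / real M) * (\<Sum>m<M. (1 / real n) * (\<Sum>k<n. f m k x))) has_derivative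
        (\<lambda>h. (1 / real M) * (\<Sum>m<M. (1 / real n) * (\<Sum>k<n. g m k x \<bullet> h)))) (at x)"
    by (intro derivative_intros grad) auto
  then show ?thesis
    unfolding global_fun_def client_fun_def by (simp add: inner_sum_left)
qed

locale strongly_convex_clients = smooth_convex_clients +
  fixes \<mu> :: real and xs :: 'a
  assumes mu_pos: "\<mu> > 0"
    and strongly_convex: "strongly_convex (global_fun M n f) \<mu>"
    and minimizer: "\<And>x. global_fun M n f xs \<le> global_fun M n f x"
begin

definition sigma_star_sq :: real where
  "sigma_star_sq = (1 / real M) * (\<Sum>m<M. (norm (client_fun n g m xs))\<^sup>2)"

definition mean_client_sigma_star_sq :: real where
  "mean_client_sigma_star_sq = (1 / real M) * (\<Sum>m<M. (1 / real n) * (\<Sum>i<n. (norm (g m i xs))\<^sup>2))"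

lemma sigma_star_sq_nonneg: "0 \<le> sigma_star_sq"
  unfolding sigma_star_sq_def by (intro mult_nonneg_nonneg sum_nonneg) auto

lemma mean_client_sigma_star_sq_nonneg: "0 \<le> mean_client_sigma_star_sq"
  unfolding mean_client_sigma_star_sq_def by (intro mult_nonneg_nonneg sum_nonneg) auto

lemma sum_client_grad_minimizer: "(\<Sum>m<M. client_fun n g m xs) = 0"
  using has_derivative_min_imp_grad_zero[OF global_fun_has_derivative minimizer] M_pos
  unfolding global_fun_def by simp

lemma mean_client_bregman_minimizer:
  "(1 / real M) * (\<Sum>m<M. client_bregman m x xs) = global_fun M n f x - global_fun M n f xs"
  unfolding bregman_div_def global_fun_def
  by (simp add: sum_subtractf inner_sum_left[symmetric] sum_client_grad_minimizer right_diff_distrib)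

lemma global_grad_sq_le:
  "(norm (global_fun M n g x))\<^sup>2 \<le> 2 * L * (global_fun M n f x - global_fun M n f xs)"
proof -
  have "global_fun M n g x = (1 / real M) *\<^sub>R (\<Sum>m<M. client_fun n g m x - client_fun n g m xs)"
    unfolding global_fun_def by (simp add: sum_subtractf sum_client_grad_minimizer)
  then have "(norm (global_fun M n g x))\<^sup>2
      \<le> (1 / real M) * (\<Sum>m<M. (norm (client_fun n g m x - client_fun n g m xs))\<^sup>2)"
    by (metis power2_norm_mean_le)
  also have "\<dots> \<le> (1 / real M) * (\<Sum>m<M. 2 * L * client_bregman m x xs)"
    by (intro mult_left_mono sum_mono client_grad_diff_sq_le) auto
  also have "\<dots> = 2 * L * (global_fun M n f x - global_fun M n f xs)"
    by (simp add: sum_distrib_left[symmetric] mean_client_bregman_minimizer[symmetric] mult_ac)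
  finally show ?thesis .
qed

context
  fixes \<gamma> :: real and x :: 'a
  assumes \<gamma>: "\<gamma> > 0"
begin

lemma mean_pseudo_grad_inner_ge:
  "global_fun M n f x - global_fun M n f xs - L / 2 * mean_drift \<gamma> x \<le> (x - xs) \<bullet> mean_pseudo_grad \<gamma> x"
proof -
  have "(\<Sum>m<M. client_fun n f m x - client_fun n f m xs - L / 2 * expected_drift m \<gamma> x)
      \<le> (\<Sum>m<M. expected_pseudo_grad m \<gamma> x \<bullet> (x - xs))"
    by (intro sum_mono expected_pseudo_grad_inner_ge \<gamma>) simp
  then have "(1 / real M) * (\<Sum>m<M. client_fun n f m x - client_fun n f m xs - L / 2 * expected_drift m \<gamma> x)
      \<le> (1 / real M) * (\<Sum>m<M. expected_pseudo_grad m \<gamma> x \<bullet> (x - xs))"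
    by (intro mult_left_mono) auto
  then show ?thesis
    unfolding global_fun_def mean_drift_def mean_pseudo_grad_def
    by (simp add: sum_subtractf sum_distrib_left inner_sum_right inner_commute right_diff_distrib mult_ac)
qed

lemma mean_pseudo_grad_sq_le:
  "(norm (mean_pseudo_grad \<gamma> x))\<^sup>2 \<le> 2 * L\<^sup>2 * mean_drift \<gamma> x + 4 * L * (global_fun M n f x - global_fun M n f xs)"
proof -
  have "mean_pseudo_grad \<gamma> x - global_fun M n g x
      = (1 / real M) *\<^sub>R (\<Sum>m<M. expected_pseudo_grad m \<gamma> x - client_fun n g m x)"
    unfolding mean_pseudo_grad_def global_fun_def by (simp add: sum_subtractf scaleR_diff_right)
  then have "(norm (mean_pseudo_grad \<gamma> x - global_fun M n g x))\<^sup>2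
      \<le> (1 / real M) * (\<Sum>m<M. (norm (expected_pseudo_grad m \<gamma> x - client_fun n g m x))\<^sup>2)"
    by (metis power2_norm_mean_le)
  also have "\<dots> \<le> (1 / real M) * (\<Sum>m<M. L\<^sup>2 * expected_drift m \<gamma> x)"
    by (intro mult_left_mono sum_mono expected_pseudo_grad_deviation_le \<gamma>) auto
  also have "\<dots> = L\<^sup>2 * mean_drift \<gamma> x" unfolding mean_drift_def by (simp add: sum_distrib_left)
  finally have "(norm (mean_pseudo_grad \<gamma> x - global_fun M n g x))\<^sup>2 \<le> L\<^sup>2 * mean_drift \<gamma> x" .
  moreover have "(norm (mean_pseudo_grad \<gamma> x))\<^sup>2
      \<le> 2 * (norm (mean_pseudo_grad \<gamma> x - global_fun M n g x))\<^sup>2 + 2 * (norm (global_fun M n g x))\<^sup>2"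
    using power2_norm_add_le[of "mean_pseudo_grad \<gamma> x - global_fun M n g x" "global_fun M n g x"] by simp
  ultimately show ?thesis using global_grad_sq_le[of x] by linarith
qed

lemma mean_sq_expected_pseudo_grad_le:
  "(1 / real M) * (\<Sum>m<M. (norm (expected_pseudo_grad m \<gamma> x))\<^sup>2)
     \<le> 4 * L\<^sup>2 * mean_drift \<gamma> x + 8 * L * (global_fun M n f x - global_fun M n f xs) + 2 * sigma_star_sq"
proof -
  have "(1 / real M) * (\<Sum>m<M. (norm (expected_pseudo_grad m \<gamma> x))\<^sup>2)
      \<le> (1 / real M) * (\<Sum>m<M. 4 * L\<^sup>2 * expected_drift m \<gamma> x + 8 * L * client_bregman m x xs
                                 + 2 * (norm (client_fun n g m xs))\<^sup>2)"
    by (intro mult_left_mono sum_mono expected_pseudo_grad_sq_le \<gamma>) auto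
  also have "\<dots> = 4 * L\<^sup>2 * mean_drift \<gamma> x + 8 * L * ((1 / real M) * (\<Sum>m<M. client_bregman m x xs))
      + 2 * sigma_star_sq"
    unfolding mean_drift_def sigma_star_sq_def
    by (simp add: sum.distrib sum_distrib_left[symmetric] algebra_simps)
  finally show ?thesis unfolding mean_client_bregman_minimizer .
qed

lemma mean_drift_le:
  "(1 - 10 * (\<gamma> * real n * L)\<^sup>2) * mean_drift \<gamma> x
     \<le> 5/4 * \<gamma>\<^sup>2 * ((1/2) * (real n * mean_client_sigma_star_sq) + (real n)\<^sup>2 * sigma_star_sq)
       + 20 * \<gamma>\<^sup>2 * L * (real n)\<^sup>2 * (global_fun M n f x - global_fun M n f xs)"
proof -
  define a where "a = 1 - 10 * (\<gamma> * real n * L)\<^sup>2"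
  have "a * mean_drift \<gamma> x = (1 / real M) * (\<Sum>m<M. a * expected_drift m \<gamma> x)"
    unfolding mean_drift_def by (simp add: sum_distrib_left)
  also have "\<dots> \<le> (1 / real M) * (\<Sum>m<M. 5/4 * \<gamma>\<^sup>2 * ((1/2) * (\<Sum>k<n. (norm (g m k xs))\<^sup>2)
        + (norm (\<Sum>k<n. g m k xs))\<^sup>2) + 20 * \<gamma>\<^sup>2 * L * (real n)\<^sup>2 * client_bregman m x xs)"
    unfolding a_def by (intro mult_left_mono sum_mono expected_drift_le \<gamma>) auto
  also have "\<dots> = 5/4 * \<gamma>\<^sup>2 * ((1/2) * ((1 / real M) * (\<Sum>m<M. \<Sum>k<n. (norm (g m k xs))\<^sup>2))
        + (1 / real M) * (\<Sum>m<M. (norm (\<Sum>k<n. g m k xs))\<^sup>2))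
      + 20 * \<gamma>\<^sup>2 * L * (real n)\<^sup>2 * ((1 / real M) * (\<Sum>m<M. client_bregman m x xs))"
  proof -
    have mean: "(1 / real M) * (\<Sum>m<M. c1 * ((1/2) * p m + q m) + c2 * r m)
        = c1 * ((1/2) * ((1 / real M) * (\<Sum>m<M. p m)) + (1 / real M) * (\<Sum>m<M. q m))
          + c2 * ((1 / real M) * (\<Sum>m<M. r m))"
      for c1 c2 :: real and p q r :: "nat \<Rightarrow> real"
    proof -
      have "(\<Sum>m<M. c1 * ((1/2) * p m + q m) + c2 * r m)
          = c1 * ((1/2) * (\<Sum>m<M. p m) + (\<Sum>m<M. q m)) + c2 * (\<Sum>m<M. r m)"
        by (simp add: sum.distrib distrib_left sum_distrib_left mult.assoc)
      then show ?thesis by (simp add: algebra_simps)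
    qed
    show ?thesis by (rule mean)
  qed
  also have "(1 / real M) * (\<Sum>m<M. \<Sum>k<n. (norm (g m k xs))\<^sup>2) = real n * mean_client_sigma_star_sq"
    unfolding mean_client_sigma_star_sq_def using n_pos by (simp add: sum_divide_distrib[symmetric])
  also have "(1 / real M) * (\<Sum>m<M. (norm (\<Sum>k<n. g m k xs))\<^sup>2) = (real n)\<^sup>2 * sigma_star_sq"
  proof -
    have "(\<Sum>k<n. g m k xs) = real n *\<^sub>R client_fun n g m xs" for m
      unfolding client_fun_def using n_pos by simp
    then show ?thesis unfolding sigma_star_sq_def by (simp add: power_mult_distrib sum_distrib_left)
  qed
  finally show ?thesis unfolding a_def mean_client_bregman_minimizer .
qed

lemma expectation_nastya_step_le_gap:
  assumes C: "1 \<le> C" "C \<le> M" and \<eta>: "0 \<le> \<eta>"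
  shows "measure_pmf.expectation (nastya_step M n C g \<gamma> \<eta> x) (\<lambda>z. (norm (z - xs))\<^sup>2)
     \<le> (norm (x - xs))\<^sup>2 - 2 * \<eta> * (global_fun M n f x - global_fun M n f xs) + \<eta> * L * mean_drift \<gamma> x
       + \<eta>\<^sup>2 * (7 * L\<^sup>2 * mean_drift \<gamma> x + 12 * L * (global_fun M n f x - global_fun M n f xs))
       + 2 * \<eta>\<^sup>2 * cohort_factor M C * sigma_star_sq"
proof -
  define D where "D = global_fun M n f x - global_fun M n f xs"
  define V where "V = mean_drift \<gamma> x"
  define c where "c = cohort_factor M C"
  have "0 \<le> \<mu> / 2 * (norm (x - xs))\<^sup>2" using mu_pos by simp
  then have D: "0 \<le> D"
    using strongly_convex_quadratic_growth[OF strongly_convex minimizer, of x] unfolding D_def by linarith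
  have first_order: "- 2 * \<eta> * ((x - xs) \<bullet> mean_pseudo_grad \<gamma> x) \<le> - 2 * \<eta> * (D - L / 2 * V)"
    using mean_pseudo_grad_inner_ge \<eta> unfolding D_def V_def by (simp add: mult_left_mono)
  have "c * ((1 / real M) * (\<Sum>m<M. (norm (expected_pseudo_grad m \<gamma> x))\<^sup>2))
      \<le> 4 * L\<^sup>2 * V + 8 * L * D + 2 * (c * sigma_star_sq)"
  proof -
    have "c * ((1 / real M) * (\<Sum>m<M. (norm (expected_pseudo_grad m \<gamma> x))\<^sup>2))
        \<le> c * (4 * L\<^sup>2 * V + 8 * L * D) + 2 * (c * sigma_star_sq)"
      using mult_left_mono[OF mean_sq_expected_pseudo_grad_le cohort_factor_nonneg]
      unfolding c_def D_def V_def by (simp add: algebra_simps)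
    also have "c * (4 * L\<^sup>2 * V + 8 * L * D) \<le> 1 * (4 * L\<^sup>2 * V + 8 * L * D)"
      unfolding c_def using cohort_factor_le_1[OF C(1)] mean_drift_nonneg D L_pos
      by (intro mult_right_mono) (auto simp: V_def)
    finally show ?thesis by simp
  qed
  then have second_order: "\<eta>\<^sup>2 * ((norm (mean_pseudo_grad \<gamma> x))\<^sup>2 + c * ((1 / real M) * (\<Sum>m<M. (norm (expected_pseudo_grad m \<gamma> x))\<^sup>2)))
      \<le> \<eta>\<^sup>2 * ((2 * L\<^sup>2 * V + 4 * L * D) + (4 * L\<^sup>2 * V + 8 * L * D + 2 * (c * sigma_star_sq)))"
    using mean_pseudo_grad_sq_le unfolding D_def V_def by (intro mult_left_mono add_mono) auto
  have "measure_pmf.expectation (nastya_step M n C g \<gamma> \<eta> x) (\<lambda>z. (norm (z - xs))\<^sup>2)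
      \<le> (norm (x - xs))\<^sup>2 + - 2 * \<eta> * (D - L / 2 * V)
        + \<eta>\<^sup>2 * ((2 * L\<^sup>2 * V + 4 * L * D) + (4 * L\<^sup>2 * V + 8 * L * D + 2 * (c * sigma_star_sq)))
        + \<eta>\<^sup>2 * (L\<^sup>2 * V)"
    using expectation_nastya_step_le[OF \<gamma> C, where \<eta> = \<eta> and x = x and xs = xs] first_order second_order
    unfolding V_def c_def by linarith
  also have "\<dots> = (norm (x - xs))\<^sup>2 - 2 * \<eta> * D + \<eta> * L * V + \<eta>\<^sup>2 * (7 * L\<^sup>2 * V + 12 * L * D)
      + 2 * \<eta>\<^sup>2 * c * sigma_star_sq"
    by (simp add: algebra_simps power2_eq_square)
  finally show ?thesis unfolding D_def V_def c_def .
qed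

lemma expectation_nastya_step_contraction:
  assumes C: "1 \<le> C" "C \<le> M" and \<gamma>n: "\<gamma> * real n \<le> \<eta>" and \<eta>L: "\<eta> \<le> 1 / (16 * L)"
  shows "measure_pmf.expectation (nastya_step M n C g \<gamma> \<eta> x) (\<lambda>z. (norm (z - xs))\<^sup>2)
     \<le> (1 - \<eta> * \<mu> / 2) * (norm (x - xs))\<^sup>2
       + 5/2 * \<eta> * \<gamma>\<^sup>2 * real n * L * (mean_client_sigma_star_sq + real n * sigma_star_sq)
       + 4 * \<eta>\<^sup>2 * cohort_factor M C * sigma_star_sq"
proof -
  have "0 \<le> \<gamma> * real n" using \<gamma> by simp
  then have \<eta>: "0 \<le> \<eta>" using \<gamma>n by linarith
  have growth: "\<mu> / 2 * (norm (x - xs))\<^sup>2 \<le> global_fun M n f x - global_fun M n f xs"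
    by (rule strongly_convex_quadratic_growth[OF strongly_convex minimizer])
  moreover have "0 \<le> \<mu> / 2 * (norm (x - xs))\<^sup>2" using mu_pos by simp
  ultimately have D: "0 \<le> global_fun M n f x - global_fun M n f xs" by linarith
  have N: "1 \<le> real n" using n_pos by simp
  show ?thesis
    by (rule one_round_arith[OF L_pos \<gamma> N \<gamma>n \<eta>L cohort_factor_nonneg growth D mean_drift_nonneg
          mean_client_sigma_star_sq_nonneg sigma_star_sq_nonneg mean_drift_le
          expectation_nastya_step_le_gap[OF C \<eta>]])
qed

end

lemma finite_set_pmf_nastya: "C \<le> M \<Longrightarrow> finite (set_pmf (nastya M n C g \<gamma> \<eta> x0 t))"
  by (induction t) (auto intro: finite_set_pmf_nastya_step)

lemma expectation_nastya_le:
  assumes \<gamma>: "\<gamma> > 0" and C: "1 \<le> C" "C \<le> M" and \<gamma>n: "\<gamma> * real n \<le> \<eta>" and \<eta>L: "\<eta> \<le> 1 / (16 * L)"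
    and \<mu>L: "\<mu> \<le> L"
  shows "measure_pmf.expectation (nastya M n C g \<gamma> \<eta> x0 T) (\<lambda>z. (norm (z - xs))\<^sup>2)
     \<le> (1 - \<eta> * \<mu> / 2) ^ T * (norm (x0 - xs))\<^sup>2
       + 5 * \<gamma>\<^sup>2 * real n * L / \<mu> * (mean_client_sigma_star_sq + real n * sigma_star_sq)
       + 8 * \<eta> / \<mu> * cohort_factor M C * sigma_star_sq"
proof -
  define q where "q = 1 - \<eta> * \<mu> / 2"
  define A where "A = 5/2 * \<eta> * \<gamma>\<^sup>2 * real n * L * (mean_client_sigma_star_sq + real n * sigma_star_sq)
       + 4 * \<eta>\<^sup>2 * cohort_factor M C * sigma_star_sq"
  define e where "e t = measure_pmf.expectation (nastya M n C g \<gamma> \<eta> x0 t) (\<lambda>z. (norm (z - xs))\<^sup>2)" for t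
  have "0 < \<gamma> * real n" using \<gamma> n_pos by simp
  then have \<eta>: "0 < \<eta>" using \<gamma>n by linarith
  have "\<eta> * \<mu> \<le> \<eta> * L" using \<mu>L \<eta> by simp
  also have "\<eta> * L \<le> 1/16" using \<eta>L L_pos \<eta> by (simp add: field_simps)
  finally have q0: "0 \<le> q" unfolding q_def by simp
  have q1: "q < 1" unfolding q_def using \<eta> mu_pos by simp
  have A0: "0 \<le> A" unfolding A_def using \<eta> L_pos mean_client_sigma_star_sq_nonneg sigma_star_sq_nonneg
      cohort_factor_nonneg by (intro add_nonneg_nonneg mult_nonneg_nonneg) auto
  have "e (Suc t) \<le> q * e t + A" for t
  proof -
    have "e (Suc t) = measure_pmf.expectation (nastya M n C g \<gamma> \<eta> x0 t)
        (\<lambda>x. measure_pmf.expectation (nastya_step M n C g \<gamma> \<eta> x) (\<lambda>z. (norm (z - xs))\<^sup>2))"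
      unfolding e_def
      by (simp, rule expectation_bind_finite[OF finite_set_pmf_nastya[OF C(2)] finite_set_pmf_nastya_step[OF C(2)]])
    also have "\<dots> \<le> measure_pmf.expectation (nastya M n C g \<gamma> \<eta> x0 t) (\<lambda>x. q * (norm (x - xs))\<^sup>2 + A)"
      unfolding q_def A_def add.assoc[symmetric]
      by (rule expectation_mono_finite[OF finite_set_pmf_nastya[OF C(2)]])
        (rule expectation_nastya_step_contraction[OF \<gamma> C \<gamma>n \<eta>L])
    also have "\<dots> = q * e t + A"
      unfolding e_def using finite_set_pmf_nastya[OF C(2)] by (simp add: integrable_measure_pmf_finite)
    finally show ?thesis .
  qed
  then have "e T \<le> q ^ T * e 0 + A / (1 - q)" by (rule linear_recursion_le[OF _ q0 q1 A0])
  also have "A / (1 - q) = 5 * \<gamma>\<^sup>2 * real n * L / \<mu> * (mean_client_sigma_star_sq + real n * sigma_star_sq)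
       + 8 * \<eta> / \<mu> * cohort_factor M C * sigma_star_sq"
    unfolding A_def q_def using \<eta> mu_pos by (simp add: field_simps power2_eq_square)
  finally show ?thesis unfolding e_def q_def by (simp add: add.assoc)
qed

end

theorem theorem1:
  fixes f :: "nat \<Rightarrow> nat \<Rightarrow> 'a::euclidean_space \<Rightarrow> real"
    and g :: "nat \<Rightarrow> nat \<Rightarrow> 'a \<Rightarrow> 'a"
    and M n C T :: nat and L \<mu> \<gamma> \<eta> :: real and x0 xs :: 'a
  assumes "M \<ge> 1" and "n \<ge> 1"
    and grad: "\<And>m i x. m < M \<Longrightarrow> i < n \<Longrightarrow> (f m i has_derivative (\<lambda>h. g m i x \<bullet> h)) (at x)"
    and cvx: "\<And>m i. m < M \<Longrightarrow> i < n \<Longrightarrow> convex_on UNIV (f m i)"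
    and smooth: "\<And>m i. m < M \<Longrightarrow> i < n \<Longrightarrow> L_smooth_grad (g m i) L"
    and F_smooth: "L_smooth_grad (global_fun M n g) L"
    and "\<mu> > 0" and F_sc: "strongly_convex (global_fun M n f) \<mu>"
    and xs_min: "\<And>x. global_fun M n f xs \<le> global_fun M n f x"
    and "\<gamma> > 0" and "1 \<le> C" and "C \<le> M"
    and "\<gamma> * real n \<le> \<eta>" and "\<eta> \<le> 1 / (16 * L)"
    and "T \<ge> 1"
  shows "measure_pmf.expectation (nastya M n C g \<gamma> \<eta> x0 T) (\<lambda>x. (norm (x - xs))\<^sup>2)
     \<le> (1 - \<eta> * \<mu> / 2) ^ T * (norm (x0 - xs))\<^sup>2
       + 5 * \<gamma>\<^sup>2 * real n * L / \<mu> *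
           ((1 / real M) * (\<Sum>m<M. (1 / real n) * (\<Sum>i<n. (norm (g m i xs))\<^sup>2))
            + real n * ((1 / real M) * (\<Sum>m<M. (norm (client_fun n g m xs))\<^sup>2)))
       + 8 * \<eta> / \<mu> * (real (M - C) / (real C * real (max (M - 1) 1)))
           * ((1 / real M) * (\<Sum>m<M. (norm (client_fun n g m xs))\<^sup>2))"
proof -
  have "0 < \<gamma> * real n" using \<open>\<gamma> > 0\<close> \<open>n \<ge> 1\<close> by simp
  then have "0 < 1 / (16 * L)" using \<open>\<gamma> * real n \<le> \<eta>\<close> \<open>\<eta> \<le> 1 / (16 * L)\<close> by linarith
  then have "L > 0" by (simp add: zero_less_divide_iff)
  interpret strongly_convex_clients f g M n L \<mu> xs
    by unfold_locales (use assms \<open>L > 0\<close> in auto)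
  have "\<mu> \<le> L"
    by (rule strongly_convex_le_L_smooth[OF global_fun_has_derivative F_smooth F_sc xs_min])
  \<comment> \<open>The bound holds for every \<open>T\<close>.\<close>
  from expectation_nastya_le[OF \<open>\<gamma> > 0\<close> \<open>1 \<le> C\<close> \<open>C \<le> M\<close> \<open>\<gamma> * real n \<le> \<eta>\<close> \<open>\<eta> \<le> 1 / (16 * L)\<close> this]
  show ?thesis unfolding mean_client_sigma_star_sq_def sigma_star_sq_def cohort_factor_def .
qed

end
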